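(* (i) Let $\Lambda:\mathbb{R}\to(0,1]$ be decreasing. Then $\mathrm{ES}_\Lambda$ is quasi-convex, law invariant, satisfies $\mathrm{ES}_\Lambda\ge\mathrm{VaR}_\Lambda$ on $L^\infty$, and every quasi-convex, law-invariant $\rho:L^\infty\to\overline{\mathbb{R}}$ with $\rho\ge\mathrm{VaR}_\Lambda$ on $L^\infty$ satisfies $\rho\ge\mathrm{ES}_\Lambda$; i.e. $\mathrm{ES}_\Lambda=\min\{\rho:L^\infty\to\overline{\mathbb{R}}\mid\rho\ge\mathrm{VaR}_\Lambda\text{ and }\rho\text{ is quasi-convex and law invariant}\}$. (ii) Let $\Lambda:\mathbb{R}\to[0,1)$ be decreasing. Then $\mathrm{ES}_\Lambda=\min\{\rho:L^\infty\to\overline{\mathbb{R}}\mid\rho\ge\mathrm{VaR}^+_\Lambda\text{ and }\rho\text{ is quasi-convex and law invariant}\}$ in the same sense. Moreover, for every decreasing $\Lambda:\mathbb{R}\to[0,1]$, $$\mathrm{ES}_\Lambda(X)=\inf_{x\in\mathbb{R}}\left(\mathrm{ES}_{\Lambda(x)}(X)\vee x\right),\quad X\in L^\infty.$$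
   Context: $(\Omega,\mathcal F,\mathbb P)$ is an atomless probability space, $L^0$ the set of all random variables, $L^\infty$ the essentially bounded ones, $\overline{\mathbb{R}}=[-\infty,\infty]$; "decreasing" is in the weak sense; $\wedge=\min$, $\vee=\max$. For $\alpha\in[0,1]$, $X\in L^0$: $\mathrm{VaR}_\alpha(X)=\inf\{x\in\mathbb{R}:\mathbb P(X\le x)\ge\alpha\}$, $\mathrm{VaR}^+_\alpha(X)=\inf\{x\in\mathbb{R}:\mathbb P(X\le x)>\alpha\}$ ($\inf\mathbb{R}=-\infty$, $\inf\emptyset=\infty$). For $X\in L^\infty$: $\mathrm{ES}_\alpha(X)=\frac{1}{1-\alpha}\int_\alpha^1\mathrm{VaR}_\beta(X)\,\mathrm d\beta$ for $\alpha<1$, $\mathrm{ES}_1(X)=\mathrm{VaR}_1(X)$. For decreasing $\Lambda:\mathbb{R}\to[0,1]$: $\mathrm{VaR}_\Lambda(X)=\inf\{x\in\mathbb{R}:\mathbb P(X\le x)\ge\Lambda(x)\}$, $\mathrm{VaR}^+_\Lambda(X)=\inf\{x\in\mathbb{R}:\mathbb P(X\le x)>\Lambda(x)\}$, and the $\Lambda$-Expected Shortfall is $\mathrm{ES}_\Lambda(X)=\sup_{x\in\mathbb{R}}\left(\mathrm{ES}_{\Lambda(x)}(X)\wedge x\right)$, $X\in L^\infty$. Quasi-convex: $\rho(\gamma X+(1-\gamma)Y)\le\max\{\rho(X),\rho(Y)\}$ for all $X,Y$, $\gamma\in[0,1]$; law invariant: $\rho(X)=\rho(Y)$ when $X,Y$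 are equally distributed. $\rho\ge\widetilde\rho$ means pointwise on the common domain. *)

theory Defs
  imports "HOL-Probability.Probability"
begin

definition atomless :: "'a measure \<Rightarrow> bool" where
  "atomless M \<longleftrightarrow> (\<forall>A\<in>sets M. 0 < measure M A \<longrightarrow>
      (\<exists>B\<in>sets M. B \<subseteq> A \<and> 0 < measure M B \<and> measure M B < measure M A))"

definition Linf :: "'a measure \<Rightarrow> ('a \<Rightarrow> real) set" where
  "Linf M = {X. X \<in> borel_measurable M \<and> (\<exists>C. AE \<omega> in M. \<bar>X \<omega>\<bar> \<le> C)}"

definition cdf_rv :: "'a measure \<Rightarrow> ('a \<Rightarrow> real) \<Rightarrow> real \<Rightarrow> real" where
  "cdf_rv M X x = measure M {\<omega>\<in>space M. X \<omega> \<le> x}"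

definition VaR :: "'a measure \<Rightarrow> real \<Rightarrow> ('a \<Rightarrow> real) \<Rightarrow> ereal" where
  "VaR M \<alpha> X = Inf {ereal x | x. cdf_rv M X x \<ge> \<alpha>}"

definition VaR_plus :: "'a measure \<Rightarrow> real \<Rightarrow> ('a \<Rightarrow> real) \<Rightarrow> ereal" where
  "VaR_plus M \<alpha> X = Inf {ereal x | x. cdf_rv M X x > \<alpha>}"

definition ES :: "'a measure \<Rightarrow> real \<Rightarrow> ('a \<Rightarrow> real) \<Rightarrow> ereal" where
  "ES M \<alpha> X = (if \<alpha> < 1
     then ereal ((1 / (1 - \<alpha>)) * (LBINT \<beta>:{\<alpha>..1}. real_of_ereal (VaR M \<beta> X)))
     else VaR M 1 X)"

definition VaR_Lambda :: "'a measure \<Rightarrow> (real \<Rightarrow> real) \<Rightarrow> ('a \<Rightarrow> real) \<Rightarrow> ereal" where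
  "VaR_Lambda M \<Lambda> X = Inf {ereal x | x. cdf_rv M X x \<ge> \<Lambda> x}"

definition VaR_Lambda_plus :: "'a measure \<Rightarrow> (real \<Rightarrow> real) \<Rightarrow> ('a \<Rightarrow> real) \<Rightarrow> ereal" where
  "VaR_Lambda_plus M \<Lambda> X = Inf {ereal x | x. cdf_rv M X x > \<Lambda> x}"

definition ES_Lambda :: "'a measure \<Rightarrow> (real \<Rightarrow> real) \<Rightarrow> ('a \<Rightarrow> real) \<Rightarrow> ereal" where
  "ES_Lambda M \<Lambda> X = (SUP x. min (ES M (\<Lambda> x) X) (ereal x))"

definition quasi_convex :: "'a measure \<Rightarrow> (('a \<Rightarrow> real) \<Rightarrow> ereal) \<Rightarrow> bool" where
  "quasi_convex M \<rho> \<longleftrightarrow> (\<forall>X\<in>Linf M. \<forall>Y\<in>Linf M. \<forall>\<gamma>\<in>{0..1::real}.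
      \<rho> (\<lambda>\<omega>. \<gamma> * X \<omega> + (1 - \<gamma>) * Y \<omega>) \<le> max (\<rho> X) (\<rho> Y))"

definition law_invariant :: "'a measure \<Rightarrow> (('a \<Rightarrow> real) \<Rightarrow> ereal) \<Rightarrow> bool" where
  "law_invariant M \<rho> \<longleftrightarrow> (\<forall>X\<in>Linf M. \<forall>Y\<in>Linf M.
      distr M borel X = distr M borel Y \<longrightarrow> \<rho> X = \<rho> Y)"

end

theory Submission
  imports Defs
begin

text \<open>
  For every level, ES at that level is law invariant and even convex, since the tail integral of the
  quantile function is the Rockafellar--Uryasev minimum of (1 - a) t plus the expected excess of X
  over t. So ES_Lambda, a supremum of the maps min (ES at level Lambda x) x, is quasi-convex and law
  invariant. It dominates VaR_Lambda because ES at level a is at least the a-quantile, and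
  VaR+_Lambda because ES at level a exceeds x whenever the distribution function at x is at most a.

  For minimality, let s be below ES(X) at a level b < 1. An atomless space carries a uniform
  variable U; applying the quantile function of X to n cyclic shifts of U along [b, 1) gives n
  copies of X whose average Y satisfies rho Y <= rho X by quasi-convexity and law invariance, and
  exceeds a Riemann sum of the quantile function over [b, 1], hence s, whenever U lies in [b, 1).
  So the distribution function of Y stays at most b to the left of s, which makes the Lambda-VaR of
  Y, and hence rho X, at least s. Finally, the supremum of min (f x) x equals the infimum of
  max (f x) x for any decreasing f, which gives the last formula.
\<close>

section \<open>Uniform random variables on atomless spaces\<close>

definition unit_uniform :: "real measure" where
  "unit_uniform = uniform_measure lborel {0..1}"

lemma sets_unit_uniform [simp, measurable_cong]: "sets unit_uniform = sets borel"
  and space_unit_uniform [simp]: "space unit_uniform = UNIV"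
  unfolding unit_uniform_def by simp_all

lemma unit_uniform_density: "unit_uniform = density lborel (indicator {0..1})"
  unfolding unit_uniform_def uniform_measure_def by (simp add: divide_ennreal_def)

lemma measure_unit_uniform:
  "A \<in> sets borel \<Longrightarrow> measure unit_uniform A = measure lborel ({0..1} \<inter> A)"
  unfolding unit_uniform_def by simp

lemma prob_space_unit_uniform: "prob_space unit_uniform"
  unfolding unit_uniform_def by (rule prob_space_uniform_measure) simp_all

lemma real_distribution_unit_uniform: "real_distribution unit_uniform"
  using prob_space_unit_uniform by (simp add: real_distribution_def real_distribution_axioms_def)

lemma integral_unit_uniform:
  fixes f :: "real \<Rightarrow> real"
  assumes "f \<in> borel_measurable borel"
  shows "integral\<^sup>L unit_uniform f = (LBINT x:{0..1}. f x)"
  unfolding unit_uniform_density set_lebesgue_integral_def using assms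
  by (subst integral_density[symmetric]) (auto simp: ennreal_indicator)

lemma cdf_unit_uniform: "cdf unit_uniform t = max 0 (min 1 t)"
proof -
  have "cdf unit_uniform t = measure lborel ({0..1} \<inter> {..t})"
    unfolding cdf_def by (simp add: measure_unit_uniform)
  also have "\<dots> = max 0 (min 1 t)"
  proof (cases "t < 0")
    case False
    then have "{0..1} \<inter> {..t} = {0..min 1 t}"
      by auto
    then show ?thesis
      using False by simp
  qed auto
  finally show ?thesis .
qed

lemma distr_eq_unit_uniform:
  assumes "prob_space M" "U \<in> borel_measurable M"
    and "\<And>t. measure M {\<omega>\<in>space M. U \<omega> \<le> t} = max 0 (min 1 t)"
  shows "distr M borel U = unit_uniform"
proof (rule cdf_unique)
  show "real_distribution (distr M borel U)"
    using assms(1,2) by (simp add: prob_space.real_distribution_distr)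
  show "cdf (distr M borel U) = cdf unit_uniform"
  proof
    fix t
    have "U -` {..t} \<inter> space M = {\<omega>\<in>space M. U \<omega> \<le> t}"
      by auto
    then show "cdf (distr M borel U) t = cdf unit_uniform t"
      unfolding cdf_def cdf_unit_uniform[unfolded cdf_def] using assms
      by (subst measure_distr) auto
  qed
qed (rule real_distribution_unit_uniform)

locale atomless_prob_space = prob_space +
  assumes atomless: "atomless M"
begin

lemma exists_subevent_prob_le_power:
  assumes A: "A \<in> events" "0 < prob A"
  shows "\<exists>B\<in>events. B \<subseteq> A \<and> 0 < prob B \<and> prob B \<le> prob A / 2^n"
proof (induction n)
  case 0
  then show ?case
    using A by auto
next
  case (Suc n)
  then obtain B where B: "B \<in> events" "B \<subseteq> A" "0 < prob B" "prob B \<le> prob A / 2^n"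
    by auto
  then obtain B' where B': "B' \<in> events" "B' \<subseteq> B" "0 < prob B'" "prob B' < prob B"
    using atomless unfolding atomless_def by blast
  have diff: "prob (B - B') = prob B - prob B'"
    using B(1) B'(1,2) by (rule finite_measure_Diff)
  have half_B: "prob B / 2 \<le> prob A / 2 ^ Suc n"
    using B(4) by simp
  show ?case
  proof (cases "prob B' \<le> prob B / 2")
    case True
    then have "prob B' \<le> prob A / 2 ^ Suc n"
      using half_B by linarith
    then show ?thesis
      using B B' by blast
  next
    case False
    then have "0 < prob (B - B')" "prob (B - B') \<le> prob A / 2 ^ Suc n"
      using half_B diff B'(4) by linarith+
    moreover have "B - B' \<in> events" "B - B' \<subseteq> A"
      using B B' by auto
    ultimately show ?thesis
      by blast
  qed
qed

lemma exists_small_subevent: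
  assumes A: "A \<in> events" "0 < prob A" and e: "0 < e"
  shows "\<exists>B\<in>events. B \<subseteq> A \<and> 0 < prob B \<and> prob B < e"
proof -
  obtain n :: nat where "1 / e < 2 ^ n"
    using real_arch_pow[of 2 "1 / e"] by auto
  then have "1 < e * 2 ^ n"
    using e by (simp add: field_simps)
  then have "prob A < e * 2 ^ n"
    using prob_le_1[of A] by linarith
  then have "prob A / 2 ^ n < e"
    by (simp add: field_simps)
  with exists_subevent_prob_le_power[OF A, of n] show ?thesis
    by (meson le_less_trans)
qed

definition greedy_step :: "'a set \<Rightarrow> real \<Rightarrow> 'a set \<Rightarrow> 'a set" where
  "greedy_step A c C = (SOME D. D \<in> events \<and> D \<subseteq> A - C \<and> prob C + prob D \<le> c \<and>
      (\<forall>E\<in>events. E \<subseteq> A - C \<and> prob C + prob E \<le> c \<longrightarrow> prob E \<le> 2 * prob D))"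

lemma greedy_step:
  fixes A :: "'a set"
  assumes "C \<in> events" "prob C \<le> c"
  defines "D \<equiv> greedy_step A c C"
  shows "D \<in> events \<and> D \<subseteq> A - C \<and> prob C + prob D \<le> c \<and>
      (\<forall>E\<in>events. E \<subseteq> A - C \<and> prob C + prob E \<le> c \<longrightarrow> prob E \<le> 2 * prob D)"
proof -
  define S where "S = {prob D | D. D \<in> events \<and> D \<subseteq> A - C \<and> prob C + prob D \<le> c}"
  have "0 \<in> S"
    unfolding S_def using assms by (intro CollectI exI[of _ "{}"]) simp
  moreover have bdd: "bdd_above S"
    unfolding S_def by (rule bdd_aboveI[of _ 1]) auto
  ultimately have "Sup S / 2 < Sup S \<or> Sup S = 0"
    using cSup_upper[of 0 S] by linarith
  then obtain D where D: "D \<in> events" "D \<subseteq> A - C" "prob C + prob D \<le> c" "Sup S \<le> 2 * prob D"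
  proof
    assume "Sup S / 2 < Sup S"
    then obtain x where "x \<in> S" "Sup S / 2 < x"
      using less_cSupE[of "Sup S / 2" S] \<open>0 \<in> S\<close> by blast
    then show thesis
      using that unfolding S_def by force
  next
    assume "Sup S = 0"
    then show thesis
      using that[of "{}"] assms by simp
  qed
  have "prob E \<le> 2 * prob D" if "E \<in> events" "E \<subseteq> A - C \<and> prob C + prob E \<le> c" for E
    using cSup_upper[OF _ bdd, of "prob E"] that D(4) unfolding S_def by fastforce
  then have "\<exists>D. D \<in> events \<and> D \<subseteq> A - C \<and> prob C + prob D \<le> c \<and>
      (\<forall>E\<in>events. E \<subseteq> A - C \<and> prob C + prob E \<le> c \<longrightarrow> prob E \<le> 2 * prob D)"
    using D by blast
  then show ?thesis
    unfolding D_def greedy_step_def by (rule someI_ex)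
qed

primrec greedy_seq :: "'a set \<Rightarrow> real \<Rightarrow> nat \<Rightarrow> 'a set" where
  "greedy_seq A c 0 = {}"
| "greedy_seq A c (Suc n) = greedy_seq A c n \<union> greedy_step A c (greedy_seq A c n)"

lemma greedy_seq:
  assumes "0 \<le> c"
  shows "greedy_seq A c n \<in> events \<and> greedy_seq A c n \<subseteq> A \<and> prob (greedy_seq A c n) \<le> c \<and>
    prob (greedy_seq A c (Suc n)) = prob (greedy_seq A c n) + prob (greedy_step A c (greedy_seq A c n))"
proof (induction n)
  case 0
  have "prob (greedy_step A c {}) \<le> c"
    using greedy_step[of "{}" c A] assms by simp
  then show ?case
    using assms by simp
next
  case (Suc n)
  let ?C = "greedy_seq A c (Suc n)"
  have "greedy_step A c (greedy_seq A c n) \<in> events" "greedy_step A c (greedy_seq A c n) \<subseteq> A"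
    using Suc greedy_step[of "greedy_seq A c n" c A] by blast+
  then have C: "?C \<in> events" "?C \<subseteq> A" "prob ?C \<le> c"
    using Suc greedy_step[of "greedy_seq A c n" c A] by auto
  have D: "greedy_step A c ?C \<in> events" "greedy_step A c ?C \<subseteq> A - ?C"
    using C greedy_step[of ?C c A] by blast+
  have "prob (?C \<union> greedy_step A c ?C) = prob ?C + prob (greedy_step A c ?C)"
    using C D by (intro finite_measure_Union) auto
  then show ?case
    using C by (simp only: greedy_seq.simps(2)[of A c "Suc n"])
qed

lemma greedy_seq_lower_bound:
  assumes c: "0 \<le> c" and E: "E \<in> events" "E \<subseteq> A - (\<Union>n. greedy_seq A c n)"
    and le: "prob (\<Union>n. greedy_seq A c n) + prob E \<le> c"
  shows "real n * prob E / 2 \<le> prob (greedy_seq A c n)"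
proof (induction n)
  case (Suc n)
  let ?C = "greedy_seq A c n"
  note C = greedy_seq[OF c, of A n]
  have "(\<Union>n. greedy_seq A c n) \<in> events"
    using greedy_seq[OF c] by blast
  then have "prob ?C \<le> prob (\<Union>n. greedy_seq A c n)"
    by (intro finite_measure_mono) auto
  moreover have "E \<subseteq> A - ?C"
    using E(2) by blast
  moreover have "\<forall>E\<in>events. E \<subseteq> A - ?C \<and> prob ?C + prob E \<le> c \<longrightarrow> prob E \<le> 2 * prob (greedy_step A c ?C)"
    using greedy_step[of ?C c A] C by blast
  ultimately have "prob E \<le> 2 * prob (greedy_step A c ?C)"
    using E(1) le by force
  then show ?case
    using Suc.IH C by (simp add: algebra_simps)
qed simp

text \<open>Subevents are collected greedily, each step taking at least half of
  the largest admissible amount; if their union fell short of c, a small leftover event would force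
  infinitely many steps of a fixed size.\<close>

lemma exists_subevent_prob_eq:
  assumes A: "A \<in> events" and c: "0 \<le> c" "c \<le> prob A"
  shows "\<exists>C\<in>events. C \<subseteq> A \<and> prob C = c"
proof -
  let ?C = "greedy_seq A c"
  let ?U = "\<Union>n. ?C n"
  note C = greedy_seq[OF c(1), of A]
  have "range ?C \<subseteq> events"
    using C by blast
  moreover have "incseq ?C"
    by (rule incseq_SucI) simp
  ultimately have lim: "(\<lambda>n. prob (?C n)) \<longlonglongrightarrow> prob ?U"
    by (rule finite_Lim_measure_incseq)
  have U: "?U \<in> events" "?U \<subseteq> A"
    using C by blast+
  have "prob ?U \<le> c"
    using C by (intro LIMSEQ_le_const2[OF lim]) blast
  moreover have "\<not> prob ?U < c"
  proof
    assume less: "prob ?U < c"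
    have "0 < prob (A - ?U)"
      using finite_measure_Diff[OF A U] less c(2) by linarith
    moreover have "A - ?U \<in> events"
      using A U(1) by (rule sets.Diff)
    ultimately obtain E where E: "E \<in> events" "E \<subseteq> A - ?U" "0 < prob E" "prob E < c - prob ?U"
      using exists_small_subevent[of "A - ?U" "c - prob ?U"] less by auto
    obtain n :: nat where "2 / prob E < real n"
      using reals_Archimedean2 by auto
    then have "1 < real n * prob E / 2"
      using E(3) by (simp add: field_simps)
    then show False
      using greedy_seq_lower_bound[OF c(1) E(1,2), of n] E(4) prob_le_1[of "?C n"] by linarith
  qed
  ultimately show ?thesis
    using U by auto
qed

text \<open>Repeated bisection yields partitions of the space into 2^k cells of probability 2^-k, each
  refining the previous one; reading the cell indices as binary expansions gives a uniform variable.\<close>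

definition bisect :: "'a set \<Rightarrow> 'a set" where
  "bisect A = (SOME B. B \<in> events \<and> B \<subseteq> A \<and> prob B = prob A / 2)"

lemma bisect:
  assumes "A \<in> events"
  shows "bisect A \<in> events \<and> bisect A \<subseteq> A \<and> prob (bisect A) = prob A / 2"
proof -
  have "0 \<le> prob A / 2" "prob A / 2 \<le> prob A"
    by simp_all
  then obtain B where "B \<in> events \<and> B \<subseteq> A \<and> prob B = prob A / 2"
    using exists_subevent_prob_eq[OF assms] by meson
  then show ?thesis
    unfolding bisect_def by (rule someI)
qed

primrec dyadic_cell :: "nat \<Rightarrow> nat \<Rightarrow> 'a set" where
  "dyadic_cell 0 j = (if j = 0 then space M else {})"
| "dyadic_cell (Suc k) j = (if even j then bisect (dyadic_cell k (j div 2))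
      else dyadic_cell k (j div 2) - bisect (dyadic_cell k (j div 2)))"

lemma dyadic_cell: "dyadic_cell k j \<in> events \<and> prob (dyadic_cell k j) = (if j < 2^k then 1 / 2^k else 0)"
proof (induction k arbitrary: j)
  case (Suc k)
  let ?A = "dyadic_cell k (j div 2)"
  have A: "?A \<in> events" "prob ?A = (if j < 2 ^ Suc k then 1 / 2^k else 0)"
    using Suc by auto
  have "prob (?A - bisect ?A) = prob ?A - prob (bisect ?A)"
    using finite_measure_Diff[OF A(1)] bisect[OF A(1)] by blast
  then show ?case
    using A bisect[OF A(1)] by auto
qed (simp add: prob_space)

lemma dyadic_cell_Suc_subset: "dyadic_cell (Suc k) j \<subseteq> dyadic_cell k (j div 2)"
  using bisect[of "dyadic_cell k (j div 2)"] dyadic_cell[of k "j div 2"] by auto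

lemma dyadic_cell_disjoint: "j \<noteq> j' \<Longrightarrow> dyadic_cell k j \<inter> dyadic_cell k j' = {}"
proof (induction k arbitrary: j j')
  case (Suc k)
  show ?case
  proof (cases "j div 2 = j' div 2")
    case True
    then have "even j \<noteq> even j'"
      using Suc.prems by (metis div_mult_mod_eq odd_iff_mod_2_eq_one even_iff_mod_2_eq_zero)
    then show ?thesis
      using True by auto
  next
    case False
    then show ?thesis
      using Suc.IH dyadic_cell_Suc_subset[of k j] dyadic_cell_Suc_subset[of k j'] by blast
  qed
qed simp

lemma dyadic_cell_cover: "\<omega> \<in> space M \<Longrightarrow> \<exists>j<2^k. \<omega> \<in> dyadic_cell k j"
proof (induction k)
  case (Suc k)
  then obtain j where j: "j < 2^k" "\<omega> \<in> dyadic_cell k j"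
    by auto
  then have "\<omega> \<in> dyadic_cell (Suc k) (2 * j) \<or> \<omega> \<in> dyadic_cell (Suc k) (2 * j + 1)"
    by simp
  moreover have "2 * j < 2 ^ Suc k" "2 * j + 1 < 2 ^ Suc k"
    using j(1) by simp_all
  ultimately show ?case
    by blast
qed simp

lemma dyadic_cell_empty: "2^k \<le> j \<Longrightarrow> dyadic_cell k j = {}"
proof (induction k arbitrary: j)
  case (Suc k)
  have "2 ^ Suc k div 2 \<le> j div 2"
    using Suc.prems by (rule div_le_mono)
  then have "dyadic_cell k (j div 2) = {}"
    by (intro Suc.IH) simp
  then show ?case
    using bisect[of "{}"] by simp
qed simp

lemma prob_UN_dyadic_cell: "prob (\<Union>j<m. dyadic_cell k j) = real (min m (2^k)) / 2^k"
proof -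
  have "prob (\<Union>j<m. dyadic_cell k j) = (\<Sum>j<m. prob (dyadic_cell k j))"
    using dyadic_cell dyadic_cell_disjoint
    by (intro finite_measure_finite_Union) (auto simp: disjoint_family_on_def)
  also have "\<dots> = real (min m (2^k)) / 2^k"
    by (induction m) (auto simp: dyadic_cell min_def add_divide_distrib)
  finally show ?thesis .
qed

definition dyadic_approx :: "nat \<Rightarrow> 'a \<Rightarrow> real" where
  "dyadic_approx k \<omega> = (\<Sum>j<2^k. real j / 2^k * indicator (dyadic_cell k j) \<omega>)"

lemma dyadic_approx_eq:
  assumes "\<omega> \<in> dyadic_cell k j"
  shows "dyadic_approx k \<omega> = real j / 2^k"
proof -
  have "j < 2^k"
    using assms dyadic_cell_empty[of k j] by fastforce
  moreover have "\<omega> \<notin> dyadic_cell k i" if "i \<noteq> j" for i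
    using assms dyadic_cell_disjoint[OF that, of k] by blast
  ultimately show ?thesis
    unfolding dyadic_approx_def using assms
    by (subst sum.remove[of _ j]) (auto intro!: sum.neutral)
qed

lemma borel_measurable_dyadic_approx [measurable]: "dyadic_approx k \<in> borel_measurable M"
  unfolding dyadic_approx_def using dyadic_cell
  by (intro borel_measurable_sum borel_measurable_times borel_measurable_const borel_measurable_indicator) auto

lemma dyadic_approx_Suc:
  assumes "\<omega> \<in> space M"
  shows "dyadic_approx k \<omega> \<le> dyadic_approx (Suc k) \<omega>"
    and "dyadic_approx (Suc k) \<omega> + 1 / 2^Suc k \<le> dyadic_approx k \<omega> + 1 / 2^k"
proof -
  obtain j where j: "\<omega> \<in> dyadic_cell (Suc k) j"
    using dyadic_cell_cover[OF assms] by blast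
  then have "\<omega> \<in> dyadic_cell k (j div 2)"
    using dyadic_cell_Suc_subset by blast
  then have "dyadic_approx k \<omega> = real (j div 2) / 2^k"
    by (rule dyadic_approx_eq)
  moreover have "dyadic_approx (Suc k) \<omega> = real j / 2^Suc k"
    using j by (rule dyadic_approx_eq)
  moreover have "real j = 2 * real (j div 2) + real (j mod 2)"
    using div_mult_mod_eq[of j 2] by (metis of_nat_add of_nat_mult of_nat_numeral mult.commute)
  ultimately have "dyadic_approx (Suc k) \<omega> = dyadic_approx k \<omega> + real (j mod 2) / 2^Suc k"
    by (simp add: field_simps)
  moreover have "0 \<le> real (j mod 2) / 2^Suc k" "real (j mod 2) / 2^Suc k \<le> 1 / 2^Suc k"
    by (simp_all add: divide_right_mono)
  moreover have "1 / 2^k = 2 * (1 / (2::real)^Suc k)"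
    by simp
  ultimately show "dyadic_approx k \<omega> \<le> dyadic_approx (Suc k) \<omega>"
    and "dyadic_approx (Suc k) \<omega> + 1 / 2^Suc k \<le> dyadic_approx k \<omega> + 1 / 2^k"
    by linarith+
qed

lemma dyadic_approx_nonneg: "0 \<le> dyadic_approx k \<omega>"
  unfolding dyadic_approx_def by (auto intro!: sum_nonneg)

lemma dyadic_approx_le:
  assumes "\<omega> \<in> space M"
  shows "dyadic_approx k \<omega> + 1 / 2^k \<le> 1"
proof (induction k)
  case (Suc k)
  then show ?case
    using dyadic_approx_Suc(2)[OF assms, of k] by linarith
qed (simp add: dyadic_approx_def)

definition dyadic_uniform :: "'a \<Rightarrow> real" where
  "dyadic_uniform \<omega> = lim (\<lambda>k. dyadic_approx k \<omega>)"

lemma dyadic_uniform_bounds: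
  assumes "\<omega> \<in> space M"
  shows "dyadic_approx k \<omega> \<le> dyadic_uniform \<omega>" "dyadic_uniform \<omega> \<le> dyadic_approx k \<omega> + 1 / 2^k"
    and "(\<lambda>k. dyadic_approx k \<omega>) \<longlonglongrightarrow> dyadic_uniform \<omega>"
proof -
  have inc: "incseq (\<lambda>k. dyadic_approx k \<omega>)"
    using dyadic_approx_Suc(1)[OF assms] by (rule incseq_SucI)
  moreover have "\<forall>k. dyadic_approx k \<omega> \<le> 1"
  proof
    fix k
    have "0 \<le> 1 / (2::real)^k"
      by simp
    then show "dyadic_approx k \<omega> \<le> 1"
      using dyadic_approx_le[OF assms, of k] by linarith
  qed
  ultimately obtain L where "(\<lambda>k. dyadic_approx k \<omega>) \<longlonglongrightarrow> L"
    using incseq_convergent by blast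
  then show lim: "(\<lambda>k. dyadic_approx k \<omega>) \<longlonglongrightarrow> dyadic_uniform \<omega>"
    unfolding dyadic_uniform_def by (simp add: limI)
  show "dyadic_approx k \<omega> \<le> dyadic_uniform \<omega>"
    by (rule incseq_le[OF inc lim])
  have "decseq (\<lambda>k. dyadic_approx k \<omega> + 1 / 2^k)"
    using dyadic_approx_Suc(2)[OF assms] by (rule decseq_SucI)
  moreover have "(\<lambda>k. dyadic_approx k \<omega> + 1 / 2^k) \<longlonglongrightarrow> dyadic_uniform \<omega> + 0"
    using lim LIMSEQ_divide_realpow_zero[of 2 1] by (intro tendsto_add) auto
  ultimately show "dyadic_uniform \<omega> \<le> dyadic_approx k \<omega> + 1 / 2^k"
    using decseq_ge by auto
qed

lemma borel_measurable_dyadic_uniform [measurable]: "dyadic_uniform \<in> borel_measurable M"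
  by (rule borel_measurable_LIMSEQ_metric[OF borel_measurable_dyadic_approx dyadic_uniform_bounds(3)])

lemma dyadic_uniform_range:
  assumes "\<omega> \<in> space M"
  shows "dyadic_uniform \<omega> \<in> {0..1}"
  using dyadic_uniform_bounds(1,2)[OF assms, of 0] dyadic_approx_nonneg[of 0 \<omega>]
    dyadic_approx_le[OF assms, of 0] by simp

lemma prob_dyadic_uniform_le_lower:
  assumes m: "m \<le> 2^k" "real m \<le> t * 2^k"
  shows "real m / 2^k \<le> prob {\<omega>\<in>space M. dyadic_uniform \<omega> \<le> t}"
proof -
  have "(\<Union>j<m. dyadic_cell k j) \<subseteq> {\<omega>\<in>space M. dyadic_uniform \<omega> \<le> t}"
  proof safe
    fix \<omega> j assume j: "j < m" "\<omega> \<in> dyadic_cell k j"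
    then show \<omega>: "\<omega> \<in> space M"
      using dyadic_cell sets.sets_into_space by blast
    have "dyadic_uniform \<omega> \<le> (real j + 1) / 2^k"
      using dyadic_uniform_bounds(2)[OF \<omega>, of k] dyadic_approx_eq[OF j(2)]
      by (simp add: add_divide_distrib)
    also have "\<dots> \<le> t"
      using j(1) m(2) by (simp add: field_simps)
    finally show "dyadic_uniform \<omega> \<le> t" .
  qed
  then have "prob (\<Union>j<m. dyadic_cell k j) \<le> prob {\<omega>\<in>space M. dyadic_uniform \<omega> \<le> t}"
    by (intro finite_measure_mono) auto
  then show ?thesis
    unfolding prob_UN_dyadic_cell using m(1) by simp
qed

lemma prob_dyadic_uniform_le_upper:
  assumes m: "t * 2^k < real m + 1"
  shows "prob {\<omega>\<in>space M. dyadic_uniform \<omega> \<le> t} \<le> (real m + 1) / 2^k"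
proof -
  have "{\<omega>\<in>space M. dyadic_uniform \<omega> \<le> t} \<subseteq> (\<Union>j<m + 1. dyadic_cell k j)"
  proof safe
    fix \<omega> assume \<omega>: "\<omega> \<in> space M" "dyadic_uniform \<omega> \<le> t"
    then obtain j where j: "\<omega> \<in> dyadic_cell k j"
      using dyadic_cell_cover by blast
    then have "real j / 2^k \<le> t"
      using dyadic_uniform_bounds(1)[OF \<omega>(1), of k] dyadic_approx_eq[OF j] \<omega>(2) by simp
    then have "j < m + 1"
      using m by (simp add: field_simps)
    then show "\<omega> \<in> (\<Union>j<m + 1. dyadic_cell k j)"
      using j by blast
  qed
  then have "prob {\<omega>\<in>space M. dyadic_uniform \<omega> \<le> t} \<le> prob (\<Union>j<m + 1. dyadic_cell k j)"
    using dyadic_cell by (intro finite_measure_mono) auto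
  also have "\<dots> \<le> (real m + 1) / 2^k"
    unfolding prob_UN_dyadic_cell by (intro divide_right_mono) auto
  finally show ?thesis .
qed

lemma prob_dyadic_uniform_le_approx:
  assumes t: "0 \<le> t" "t \<le> 1"
  shows "\<bar>prob {\<omega>\<in>space M. dyadic_uniform \<omega> \<le> t} - t\<bar> \<le> 1 / 2^k"
proof -
  define m where "m = nat \<lfloor>t * 2^k\<rfloor>"
  have "real m = of_int \<lfloor>t * 2^k\<rfloor>"
    unfolding m_def using t by simp
  then have m: "real m \<le> t * 2^k" "t * 2^k < real m + 1"
    by linarith+
  have "t * 2^k \<le> 2^k"
    using t(2) by simp
  then have "\<lfloor>t * 2^k\<rfloor> \<le> \<lfloor>(2::real)^k\<rfloor>"
    by (rule floor_mono)
  then have "m \<le> 2^k"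
    unfolding m_def by (simp add: nat_le_iff)
  have "(t - 1 / 2^k) * 2^k < real m"
    using m(2) by (simp add: left_diff_distrib)
  then have "t - 1 / 2^k < real m / 2^k"
    by (simp add: pos_less_divide_eq)
  moreover have "real m / 2^k \<le> t"
    using m(1) by (simp add: pos_divide_le_eq)
  ultimately show ?thesis
    using prob_dyadic_uniform_le_lower[OF \<open>m \<le> 2^k\<close> m(1)] prob_dyadic_uniform_le_upper[OF m(2)]
    by (simp add: abs_le_iff add_divide_distrib)
qed

lemma prob_dyadic_uniform_le: "prob {\<omega>\<in>space M. dyadic_uniform \<omega> \<le> t} = max 0 (min 1 t)"
proof -
  let ?P = "prob {\<omega>\<in>space M. dyadic_uniform \<omega> \<le> t}"
  consider "t < 0" | "1 < t" | "0 \<le> t" "t \<le> 1"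
    by linarith
  then show ?thesis
  proof cases
    case 1
    then have empty: "{\<omega>\<in>space M. dyadic_uniform \<omega> \<le> t} = {}"
      using dyadic_uniform_range by fastforce
    show ?thesis
      unfolding empty using 1 by simp
  next
    case 2
    then have full: "{\<omega>\<in>space M. dyadic_uniform \<omega> \<le> t} = space M"
      using dyadic_uniform_range by fastforce
    show ?thesis
      unfolding full using 2 by (simp add: prob_space)
  next
    case 3
    have "\<bar>?P - t\<bar> \<le> 0"
      by (rule LIMSEQ_le_const[OF LIMSEQ_divide_realpow_zero[of 2 1]])
        (use prob_dyadic_uniform_le_approx[OF 3] in auto)
    then show ?thesis
      using 3 by simp
  qed
qed

lemma exists_unit_uniform:
  obtains U where "U \<in> borel_measurable M" "distr M borel U = unit_uniform"
    "\<And>\<omega>. \<omega> \<in> space M \<Longrightarrow> U \<omega> \<in> {0..1}"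
proof (rule that)
  show "distr M borel dyadic_uniform = unit_uniform"
    using prob_dyadic_uniform_le
    by (intro distr_eq_unit_uniform[OF prob_space_axioms borel_measurable_dyadic_uniform])
      (simp add: measure_def)
qed (use dyadic_uniform_range in auto)

end

section \<open>Quantile functions of bounded random variables\<close>

lemma Inf_level_attained:
  fixes F :: "real \<Rightarrow> real"
  assumes "mono F" "\<And>x. continuous (at_right x) F"
    and "{x. u \<le> F x} \<noteq> {}" "bdd_below {x. u \<le> F x}"
  shows "u \<le> F (Inf {x. u \<le> F x})"
  unfolding continuous_at_Inf_mono[OF assms] using assms(3) by (auto intro: cINF_greatest)

context prob_space
begin

lemma Linf_measurable: "X \<in> Linf M \<Longrightarrow> X \<in> borel_measurable M"
  unfolding Linf_def by simp

definition ess_bound :: "('a \<Rightarrow> real) \<Rightarrow> real" where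
  "ess_bound X = (SOME C. 0 \<le> C \<and> (AE \<omega> in M. \<bar>X \<omega>\<bar> \<le> C))"

lemma ess_bound:
  assumes "X \<in> Linf M"
  shows "0 \<le> ess_bound X" "AE \<omega> in M. \<bar>X \<omega>\<bar> \<le> ess_bound X"
proof -
  obtain C where "AE \<omega> in M. \<bar>X \<omega>\<bar> \<le> C"
    using assms unfolding Linf_def by auto
  then have "AE \<omega> in M. \<bar>X \<omega>\<bar> \<le> max C 0"
    by eventually_elim simp
  then have "\<exists>C. 0 \<le> C \<and> (AE \<omega> in M. \<bar>X \<omega>\<bar> \<le> C)"
    by (intro exI[of _ "max C 0"]) simp
  then have "0 \<le> ess_bound X \<and> (AE \<omega> in M. \<bar>X \<omega>\<bar> \<le> ess_bound X)"
    unfolding ess_bound_def by (rule someI_ex)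
  then show "0 \<le> ess_bound X" "AE \<omega> in M. \<bar>X \<omega>\<bar> \<le> ess_bound X"
    by simp_all
qed

lemma cdf_rv_eq_cdf_distr:
  assumes "X \<in> borel_measurable M"
  shows "cdf_rv M X = cdf (distr M borel X)"
proof
  fix x
  have "X -` {..x} \<inter> space M = {\<omega>\<in>space M. X \<omega> \<le> x}"
    by auto
  then show "cdf_rv M X x = cdf (distr M borel X) x"
    unfolding cdf_def cdf_rv_def using assms by (subst measure_distr) auto
qed

lemma cdf_rv_bounds: "0 \<le> cdf_rv M X x" "cdf_rv M X x \<le> 1"
  unfolding cdf_rv_def by simp_all

lemma mono_cdf_rv: "X \<in> borel_measurable M \<Longrightarrow> mono (cdf_rv M X)"
  unfolding cdf_rv_eq_cdf_distr
  by (auto intro!: monoI finite_borel_measure.cdf_nondecreasing real_distribution.finite_borel_measure_M)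

lemma cdf_rv_right_continuous:
  "X \<in> borel_measurable M \<Longrightarrow> continuous (at_right x) (cdf_rv M X)"
  unfolding cdf_rv_eq_cdf_distr
  by (auto intro: finite_borel_measure.cdf_is_right_cont real_distribution.finite_borel_measure_M)

lemma cdf_rv_eq_1:
  assumes X: "X \<in> Linf M" and x: "ess_bound X \<le> x"
  shows "cdf_rv M X x = 1"
proof -
  have "AE \<omega> in M. X \<omega> \<le> x"
    using ess_bound(2)[OF X] by eventually_elim (use x in auto)
  then show ?thesis
    unfolding cdf_rv_def using Linf_measurable[OF X] by (subst prob_Collect_eq_1) auto
qed

lemma cdf_rv_eq_0:
  assumes X: "X \<in> Linf M" and x: "x < - ess_bound X"
  shows "cdf_rv M X x = 0"
proof -
  have "AE \<omega> in M. \<not> X \<omega> \<le> x"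
    using ess_bound(2)[OF X] by eventually_elim (use x in auto)
  then show ?thesis
    unfolding cdf_rv_def using Linf_measurable[OF X] by (subst prob_Collect_eq_0) auto
qed

text \<open>On (0, 1] this is the quantile VaR (see VaR_eq_quantile); outside it is extended by
  constants so that it is monotone and bounded on the whole line.\<close>

definition quantile :: "('a \<Rightarrow> real) \<Rightarrow> real \<Rightarrow> real" where
  "quantile X u = (if u \<le> 0 then - ess_bound X else Inf {x. min u 1 \<le> cdf_rv M X x})"

lemma quantile_le_iff:
  assumes X: "X \<in> Linf M" and u: "0 < u" "u \<le> 1"
  shows "quantile X u \<le> y \<longleftrightarrow> u \<le> cdf_rv M X y"
proof -
  let ?S = "{x. u \<le> cdf_rv M X x}"
  have q: "quantile X u = Inf ?S"
    unfolding quantile_def using u by simp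
  have "ess_bound X \<in> ?S"
    using cdf_rv_eq_1[OF X] u by simp
  then have ne: "?S \<noteq> {}"
    by blast
  have bdd: "bdd_below ?S"
  proof (rule bdd_belowI)
    fix x assume "x \<in> ?S"
    then show "- ess_bound X \<le> x"
      using cdf_rv_eq_0[OF X, of x] u by force
  qed
  show ?thesis
  proof
    assume "quantile X u \<le> y"
    moreover have "u \<le> cdf_rv M X (Inf ?S)"
      using Linf_measurable[OF X] ne bdd
      by (intro Inf_level_attained mono_cdf_rv cdf_rv_right_continuous)
    ultimately show "u \<le> cdf_rv M X y"
      unfolding q using mono_cdf_rv[OF Linf_measurable[OF X]] by (meson monoD order_trans)
  next
    assume "u \<le> cdf_rv M X y"
    then show "quantile X u \<le> y"
      unfolding q using bdd by (auto intro: cInf_lower)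
  qed
qed

lemma le_cdf_rv_quantile:
  assumes "X \<in> Linf M" "0 < u" "u \<le> 1"
  shows "u \<le> cdf_rv M X (quantile X u)"
  using quantile_le_iff[OF assms] by blast

lemma VaR_eq_quantile:
  assumes X: "X \<in> Linf M" and u: "0 < u" "u \<le> 1"
  shows "VaR M u X = ereal (quantile X u)"
  unfolding VaR_def
proof (rule antisym)
  show "Inf {ereal x |x. u \<le> cdf_rv M X x} \<le> ereal (quantile X u)"
    using quantile_le_iff[OF X u] by (intro Inf_lower) auto
  show "ereal (quantile X u) \<le> Inf {ereal x |x. u \<le> cdf_rv M X x}"
    using quantile_le_iff[OF X u] by (intro Inf_greatest) auto
qed

lemma quantile_min_1: "0 < u \<Longrightarrow> quantile X u = quantile X (min u 1)"
  unfolding quantile_def by (simp add: min_def)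

lemma quantile_bounds:
  assumes X: "X \<in> Linf M"
  shows "- ess_bound X \<le> quantile X u" "quantile X u \<le> ess_bound X"
proof -
  have "- ess_bound X \<le> quantile X u \<and> quantile X u \<le> ess_bound X"
  proof (cases "u \<le> 0")
    case True
    then show ?thesis
      using ess_bound(1)[OF X] unfolding quantile_def by simp
  next
    case False
    let ?v = "min u 1"
    have v: "0 < ?v" "?v \<le> 1"
      using False by auto
    have upper: "quantile X ?v \<le> ess_bound X"
      using quantile_le_iff[OF X v, of "ess_bound X"] cdf_rv_eq_1[OF X order_refl] v(2) by simp
    have lower: "- ess_bound X \<le> quantile X ?v"
    proof (rule ccontr)
      assume "\<not> - ess_bound X \<le> quantile X ?v"
      then have "cdf_rv M X (quantile X ?v) = 0"
        by (intro cdf_rv_eq_0[OF X]) simp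
      moreover have "?v \<le> cdf_rv M X (quantile X ?v)"
        using le_cdf_rv_quantile[OF X v] .
      ultimately show False
        using v(1) by simp
    qed
    have "quantile X u = quantile X ?v"
      using False by (intro quantile_min_1) simp
    then show ?thesis
      using upper lower by simp
  qed
  then show "- ess_bound X \<le> quantile X u" "quantile X u \<le> ess_bound X"
    by simp_all
qed

lemma abs_quantile_le: "X \<in> Linf M \<Longrightarrow> \<bar>quantile X u\<bar> \<le> ess_bound X"
  using quantile_bounds[of X u] by linarith

lemma mono_quantile:
  assumes X: "X \<in> Linf M"
  shows "mono (quantile X)"
proof
  fix u v :: real assume uv: "u \<le> v"
  show "quantile X u \<le> quantile X v"
  proof (cases "u \<le> 0")
    case True
    then show ?thesis
      using quantile_bounds(1)[OF X, of v] unfolding quantile_def by simp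
  next
    case False
    have u': "0 < min u 1" "min u 1 \<le> 1" and v': "0 < min v 1" "min v 1 \<le> 1"
      using False uv by auto
    have "min u 1 \<le> min v 1"
      using uv by (rule min.mono) simp
    also have "min v 1 \<le> cdf_rv M X (quantile X (min v 1))"
      using le_cdf_rv_quantile[OF X v'] .
    finally have "quantile X (min u 1) \<le> quantile X (min v 1)"
      using quantile_le_iff[OF X u'] by simp
    moreover have "quantile X u = quantile X (min u 1)" "quantile X v = quantile X (min v 1)"
      using False uv by (intro quantile_min_1; simp)+
    ultimately show ?thesis
      by linarith
  qed
qed

lemma borel_measurable_quantile [measurable]: "X \<in> Linf M \<Longrightarrow> quantile X \<in> borel_measurable borel"
  using mono_quantile by (rule borel_measurable_mono)

lemma measure_lborel_between:
  fixes S :: "real set"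
  assumes "0 \<le> a" "{0<..a} \<subseteq> S" "S \<subseteq> {0..a}" "S \<in> sets borel"
  shows "measure lborel S = a"
proof -
  have "emeasure lborel {0<..a} \<le> emeasure lborel S"
    by (rule emeasure_mono) (use assms in auto)
  moreover have "emeasure lborel S \<le> emeasure lborel {0..a}"
    by (rule emeasure_mono) (use assms in auto)
  ultimately have "emeasure lborel S = ennreal a"
    using assms(1) by (simp add: antisym)
  then show ?thesis
    using assms(1) by (simp add: measure_def)
qed

lemma distr_quantile:
  assumes X: "X \<in> Linf M"
  shows "distr unit_uniform borel (quantile X) = distr M borel X"
proof (rule cdf_unique)
  show "real_distribution (distr unit_uniform borel (quantile X))"
    using prob_space.real_distribution_distr[OF prob_space_unit_uniform] X by simp
  show "real_distribution (distr M borel X)"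
    using Linf_measurable[OF X] by simp
  show "cdf (distr unit_uniform borel (quantile X)) = cdf (distr M borel X)"
  proof
    fix y
    let ?S = "{0..1} \<inter> quantile X -` {..y}"
    have preimage: "quantile X -` {..y} \<in> sets borel"
      by (rule measurable_sets_borel[OF borel_measurable_quantile[OF X]]) simp
    have S: "?S \<in> sets borel"
      by (rule sets.Int[OF _ preimage]) simp
    have "{0<..cdf_rv M X y} \<subseteq> ?S"
    proof
      fix u assume u: "u \<in> {0<..cdf_rv M X y}"
      then have "u \<le> 1"
        using cdf_rv_bounds(2)[of X y] by simp
      then show "u \<in> ?S"
        using u quantile_le_iff[OF X, of u y] by simp
    qed
    moreover have "?S \<subseteq> {0..cdf_rv M X y}"
    proof
      fix u assume u: "u \<in> ?S"
      show "u \<in> {0..cdf_rv M X y}"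
      proof (cases "u = 0")
        case False
        then show ?thesis
          using u quantile_le_iff[OF X, of u y] by simp
      qed (simp add: cdf_rv_bounds)
    qed
    ultimately have "measure lborel ?S = cdf_rv M X y"
      using S cdf_rv_bounds by (intro measure_lborel_between) auto
    moreover have "cdf (distr unit_uniform borel (quantile X)) y = measure unit_uniform (quantile X -` {..y})"
      unfolding cdf_def using X by (subst measure_distr) auto
    ultimately show "cdf (distr unit_uniform borel (quantile X)) y = cdf (distr M borel X) y"
      using preimage by (simp add: measure_unit_uniform cdf_rv_eq_cdf_distr[OF Linf_measurable[OF X]])
  qed
qed

end

section \<open>Expected shortfall as an average of quantiles\<close>

lemma mono_integrable_on: "mono (f :: real \<Rightarrow> real) \<Longrightarrow> f integrable_on {a..b}"
  by (rule integrable_on_mono_on) (simp add: mono_on_def monoD)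

lemma const_le_integral:
  fixes f :: "real \<Rightarrow> real"
  assumes "f integrable_on {a..b}" "a \<le> b" "\<And>x. x \<in> {a..b} \<Longrightarrow> c \<le> f x"
  shows "(b - a) * c \<le> integral {a..b} f"
proof -
  have "integral {a..b} (\<lambda>x. c) \<le> integral {a..b} f"
    using assms by (intro integral_le) auto
  then show ?thesis
    using assms(2) by simp
qed

lemma integral_le_const:
  fixes f :: "real \<Rightarrow> real"
  assumes "f integrable_on {a..b}" "a \<le> b" "\<And>x. x \<in> {a..b} \<Longrightarrow> f x \<le> c"
  shows "integral {a..b} f \<le> (b - a) * c"
proof -
  have "integral {a..b} f \<le> integral {a..b} (\<lambda>x. c)"
    using assms by (intro integral_le) auto
  then show ?thesis
    using assms(2) by simp
qed

lemma mono_integral_bounds: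
  fixes f :: "real \<Rightarrow> real"
  assumes "mono f" "a \<le> b"
  shows "(b - a) * f a \<le> integral {a..b} f" "integral {a..b} f \<le> (b - a) * f b"
  using assms(2) by (intro const_le_integral integral_le_const mono_integrable_on assms(1);
      auto intro: monoD[OF assms(1)])+

lemma mono_average_integral_le:
  fixes f :: "real \<Rightarrow> real"
  assumes f: "mono f" and abc: "a \<le> b" "b < c"
  shows "integral {a..c} f / (c - a) \<le> integral {b..c} f / (c - b)"
proof -
  let ?I = "integral {b..c} f"
  have "integral {a..c} f = integral {a..b} f + ?I"
    using abc mono_integrable_on[OF f]
    by (simp add: Henstock_Kurzweil_Integration.integral_combine)
  also have "integral {a..b} f \<le> (b - a) * f b"
    using mono_integral_bounds(2)[OF f abc(1)] .
  also have "(b - a) * f b \<le> (b - a) * (?I / (c - b))"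
    using mono_integral_bounds(1)[OF f, of b c] abc by (intro mult_left_mono) (auto simp: field_simps)
  also have "(b - a) * (?I / (c - b)) + ?I = (c - a) * (?I / (c - b))"
    using abc by (simp add: field_simps)
  finally show ?thesis
    using abc by (simp add: field_simps)
qed

lemma set_integral_eq_integral_bounded:
  fixes g :: "real \<Rightarrow> real"
  assumes [measurable]: "g \<in> borel_measurable borel" and "\<And>u. \<bar>g u\<bar> \<le> B"
  shows "(LBINT u:{a..b}. g u) = integral {a..b} g"
proof -
  have "set_integrable lborel {a..b} g"
    unfolding set_integrable_def
    by (rule integrableI_bounded_set_indicator[where B=B])
      (use assms emeasure_lborel_cbox_finite[of a b, unfolded cbox_interval] in auto)
  then show ?thesis
    by (rule set_borel_integral_eq_integral(2))
qed

context prob_space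
begin

lemma integrable_on_quantile: "X \<in> Linf M \<Longrightarrow> quantile X integrable_on {a..b}"
  using mono_quantile by (rule mono_integrable_on)

lemma set_integral_VaR:
  assumes X: "X \<in> Linf M" and a: "0 \<le> a"
  shows "(LBINT \<beta>:{a..1}. real_of_ereal (VaR M \<beta> X)) = integral {a..1} (quantile X)"
proof -
  define h where "h \<beta> = (if \<beta> = 0 then 0 else quantile X \<beta>)" for \<beta>
  have [measurable]: "h \<in> borel_measurable borel"
    unfolding h_def using X by measurable
  have VaR_0: "VaR M 0 X = - \<infinity>"
    unfolding VaR_def by (intro ereal_bot Inf_lower) (auto simp: cdf_rv_bounds)
  have "(LBINT \<beta>:{a..1}. real_of_ereal (VaR M \<beta> X)) = (LBINT \<beta>:{a..1}. h \<beta>)"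
    using a VaR_eq_quantile[OF X] VaR_0 unfolding h_def
    by (intro set_lebesgue_integral_cong) auto
  also have "\<dots> = (LBINT \<beta>:{a..1}. quantile X \<beta>)"
  proof (rule set_lebesgue_integral_cong_AE)
    show "AE \<beta>\<in>{a..1} in lborel. h \<beta> = quantile X \<beta>"
      using AE_lborel_singleton[of 0] by eventually_elim (simp add: h_def)
  qed (use X in simp_all)
  also have "\<dots> = integral {a..1} (quantile X)"
    using X abs_quantile_le by (intro set_integral_eq_integral_bounded) auto
  finally show ?thesis .
qed

lemma ES_eq_integral_quantile:
  assumes "X \<in> Linf M" "0 \<le> a" "a < 1"
  shows "ES M a X = ereal (integral {a..1} (quantile X) / (1 - a))"
  unfolding ES_def using assms set_integral_VaR by simp

lemma ES_1: "X \<in> Linf M \<Longrightarrow> ES M 1 X = ereal (quantile X 1)"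
  unfolding ES_def using VaR_eq_quantile[of X 1] by simp

lemma quantile_le_ES:
  assumes X: "X \<in> Linf M" and a: "0 \<le> a" "a \<le> 1"
  shows "ereal (quantile X a) \<le> ES M a X"
proof (cases "a = 1")
  case False
  then have "(1 - a) * quantile X a \<le> integral {a..1} (quantile X)"
    using mono_integral_bounds(1)[OF mono_quantile[OF X]] a by simp
  then show ?thesis
    using ES_eq_integral_quantile[OF X] a False by (simp add: field_simps)
qed (simp add: ES_1[OF X])

lemma ES_mono:
  assumes X: "X \<in> Linf M" and ab: "0 \<le> a" "a \<le> b" "b \<le> 1"
  shows "ES M a X \<le> ES M b X"
proof (cases "a = 1")
  case False
  then have a: "a < 1"
    using ab by simp
  show ?thesis
  proof (cases "b = 1")
    case True
    have "integral {a..1} (quantile X) \<le> (1 - a) * quantile X 1"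
      using mono_integral_bounds(2)[OF mono_quantile[OF X]] a by simp
    then show ?thesis
      using ES_eq_integral_quantile[OF X ab(1) a] ES_1[OF X] True a by (simp add: field_simps)
  next
    case False
    then show ?thesis
      using mono_average_integral_le[OF mono_quantile[OF X], of a b 1] ab
      by (simp add: ES_eq_integral_quantile[OF X])
  qed
qed (use ab in simp)

lemma ES_ge_of_cdf_rv_le:
  assumes X: "X \<in> Linf M" and a: "0 \<le> a" "a < 1" and x: "cdf_rv M X x \<le> a"
  shows "ereal x \<le> ES M a X"
proof -
  have "x < quantile X u" if "u \<in> {a<..1}" for u
    using quantile_le_iff[OF X, of u x] that a x by auto
  then have "integral {a..1} (quantile X) = integral {a..1} (\<lambda>u. max (quantile X u) x)"
    by (intro integral_spike[of "{a}"]) auto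
  also have "(1 - a) * x \<le> \<dots>"
    using a mono_quantile[OF X]
    by (intro const_le_integral mono_integrable_on) (auto simp: mono_def max.coboundedI1)
  finally have "(1 - a) * x \<le> integral {a..1} (quantile X)" .
  then show ?thesis
    using ES_eq_integral_quantile[OF X a] a by (simp add: field_simps)
qed

lemma ES_tail_average_left_continuous:
  assumes X: "X \<in> Linf M" and a: "0 < a" "a < 1"
    and s: "s < integral {a..1} (quantile X) / (1 - a)"
  obtains b where "0 \<le> b" "b < a" "s < integral {b..1} (quantile X) / (1 - b)"
proof -
  let ?g = "\<lambda>b. integral {b..1} (quantile X) / (1 - b)"
  have "continuous_on {0..1} (\<lambda>b. integral {b..1} (quantile X))"
    by (rule indefinite_integral_continuous_1'[OF integrable_on_quantile[OF X]])
  then have "continuous_on {0..a} (\<lambda>b. integral {b..1} (quantile X))"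
    by (rule continuous_on_subset) (use a in auto)
  then have "continuous_on {0..a} ?g"
    using a by (intro continuous_on_divide continuous_on_diff continuous_on_const continuous_on_id) auto
  then have "(?g \<longlongrightarrow> ?g a) (at_left a)"
    using a by (intro continuous_on_Icc_at_leftD) simp_all
  then have "eventually (\<lambda>b. s < ?g b) (at_left a)"
    using s by (rule order_tendstoD)
  moreover have "eventually (\<lambda>b. b \<in> {0<..<a}) (at_left a)"
    using a(1) by (rule eventually_at_left_real)
  ultimately have "\<exists>b. s < ?g b \<and> b \<in> {0<..<a}"
    using eventually_happens'[OF trivial_limit_at_left_real] eventually_conj by blast
  then obtain b where "s < ?g b" "b \<in> {0<..<a}"
    by blast
  then show ?thesis
    using that[of b] by simp
qed

end

section \<open>Quasi-convexity and law invariance\<close>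

lemma quasi_convexD:
  "quasi_convex M \<rho> \<Longrightarrow> X \<in> Linf M \<Longrightarrow> Y \<in> Linf M \<Longrightarrow> \<gamma> \<in> {0..1} \<Longrightarrow>
    \<rho> (\<lambda>\<omega>. \<gamma> * X \<omega> + (1 - \<gamma>) * Y \<omega>) \<le> max (\<rho> X) (\<rho> Y)"
  unfolding quasi_convex_def by blast

lemma law_invariantD:
  "law_invariant M \<rho> \<Longrightarrow> X \<in> Linf M \<Longrightarrow> Y \<in> Linf M \<Longrightarrow> distr M borel X = distr M borel Y \<Longrightarrow>
    \<rho> X = \<rho> Y"
  unfolding law_invariant_def by blast

lemma mono_excess: "mono f \<Longrightarrow> mono (\<lambda>u. max (f u - t) (0::real))"
  unfolding mono_def by (metis diff_right_mono max.mono order_refl)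

text \<open>Rockafellar--Uryasev: the tail integral of a monotone f is the minimum over t of
  (1 - a) t plus the integrated excess over t, attained at t = f a.\<close>

lemma integral_tail_le_excess:
  fixes f :: "real \<Rightarrow> real"
  assumes f: "mono f" and a: "0 \<le> a" "a \<le> 1"
  shows "integral {a..1} f \<le> (1 - a) * t + integral {0..1} (\<lambda>u. max (f u - t) 0)"
proof -
  let ?e = "\<lambda>u. max (f u - t) 0"
  have e: "\<And>c d. ?e integrable_on {c..d}"
    by (rule mono_integrable_on[OF mono_excess[OF f]])
  have "integral {a..1} f \<le> integral {a..1} (\<lambda>u. t + ?e u)"
    using mono_integrable_on[OF f] e by (intro integral_le integrable_add) auto
  also have "\<dots> = (1 - a) * t + integral {a..1} ?e"
    using a e by (subst integral_add) auto
  also have "integral {a..1} ?e \<le> integral {0..1} ?e"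
  proof -
    have "0 \<le> integral {0..a} ?e"
      using integral_nonneg[OF e] by simp
    then show ?thesis
      using Henstock_Kurzweil_Integration.integral_combine[OF a e] by linarith
  qed
  finally show ?thesis
    by simp
qed

lemma integral_tail_eq_excess:
  fixes f :: "real \<Rightarrow> real"
  assumes f: "mono f" and a: "0 \<le> a" "a \<le> 1"
  shows "integral {a..1} f = (1 - a) * f a + integral {0..1} (\<lambda>u. max (f u - f a) 0)"
proof -
  let ?e = "\<lambda>u. max (f u - f a) 0"
  have "integral {0..a} ?e = integral {0..a} (\<lambda>u. 0)"
  proof (rule integral_cong)
    fix u assume "u \<in> {0..a}"
    then show "?e u = 0"
      using monoD[OF f, of u a] by simp
  qed
  moreover have "integral {a..1} ?e = integral {a..1} (\<lambda>u. f u - f a)"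
  proof (rule integral_cong)
    fix u assume "u \<in> {a..1}"
    then show "?e u = f u - f a"
      using monoD[OF f, of a u] by simp
  qed
  moreover have "integral {a..1} (\<lambda>u. f u - f a) = integral {a..1} f - (1 - a) * f a"
    using a mono_integrable_on[OF f] by (subst integral_diff) auto
  ultimately show ?thesis
    using Henstock_Kurzweil_Integration.integral_combine[OF a mono_integrable_on[OF mono_excess[OF f]],
        of "f a"]
    by simp
qed

lemma max_0_convex:
  fixes \<gamma> x y :: real
  assumes "0 \<le> \<gamma>" "\<gamma> \<le> 1"
  shows "max (\<gamma> * x + (1 - \<gamma>) * y) 0 \<le> \<gamma> * max x 0 + (1 - \<gamma>) * max y 0"
proof -
  have "\<gamma> * x \<le> \<gamma> * max x 0" "(1 - \<gamma>) * y \<le> (1 - \<gamma>) * max y 0"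
    using assms by (simp_all add: mult_left_mono)
  moreover have "0 \<le> \<gamma> * max x 0" "0 \<le> (1 - \<gamma>) * max y 0"
    using assms by simp_all
  ultimately show ?thesis
    by linarith
qed

context prob_space
begin

lemma Linf_lincomb:
  assumes X: "X \<in> Linf M" and Y: "Y \<in> Linf M"
  shows "(\<lambda>\<omega>. c * X \<omega> + d * Y \<omega>) \<in> Linf M"
proof -
  have "(\<lambda>\<omega>. c * X \<omega> + d * Y \<omega>) \<in> borel_measurable M"
    using Linf_measurable[OF X] Linf_measurable[OF Y] by measurable
  moreover have "AE \<omega> in M. \<bar>c * X \<omega> + d * Y \<omega>\<bar> \<le> \<bar>c\<bar> * ess_bound X + \<bar>d\<bar> * ess_bound Y"
    using ess_bound(2)[OF X] ess_bound(2)[OF Y]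
  proof eventually_elim
    case (elim \<omega>)
    have "\<bar>c * X \<omega> + d * Y \<omega>\<bar> \<le> \<bar>c\<bar> * \<bar>X \<omega>\<bar> + \<bar>d\<bar> * \<bar>Y \<omega>\<bar>"
      by (metis abs_mult abs_triangle_ineq)
    also have "\<dots> \<le> \<bar>c\<bar> * ess_bound X + \<bar>d\<bar> * ess_bound Y"
      using elim by (intro add_mono mult_left_mono) auto
    finally show ?case .
  qed
  ultimately show ?thesis
    unfolding Linf_def by blast
qed

lemma integrable_excess:
  assumes X: "X \<in> Linf M"
  shows "integrable M (\<lambda>\<omega>. max (X \<omega> - t) 0)"
proof (rule integrable_const_bound[where B="ess_bound X + \<bar>t\<bar>"])
  show "AE \<omega> in M. norm (max (X \<omega> - t) 0) \<le> ess_bound X + \<bar>t\<bar>"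
    using ess_bound[OF X] by (auto elim!: eventually_mono)
qed (use Linf_measurable[OF X] in measurable)

lemma expectation_excess:
  assumes X: "X \<in> Linf M"
  shows "expectation (\<lambda>\<omega>. max (X \<omega> - t) 0) = integral {0..1} (\<lambda>u. max (quantile X u - t) 0)"
proof -
  let ?g = "\<lambda>x. max (x - t) (0::real)"
  have [measurable]: "X \<in> borel_measurable M" "quantile X \<in> borel_measurable borel"
    using X by (simp_all add: Linf_measurable)
  have "expectation (\<lambda>\<omega>. ?g (X \<omega>)) = integral\<^sup>L (distr M borel X) ?g"
    by (rule integral_distr[symmetric]) auto
  also have "\<dots> = integral\<^sup>L (distr unit_uniform borel (quantile X)) ?g"
    using distr_quantile[OF X] by simp
  also have "\<dots> = integral\<^sup>L unit_uniform (\<lambda>u. ?g (quantile X u))"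
    by (subst integral_distr) auto
  also have "\<dots> = (LBINT u:{0..1}. ?g (quantile X u))"
    by (rule integral_unit_uniform) measurable
  also have "\<dots> = integral {0..1} (\<lambda>u. ?g (quantile X u))"
  proof (rule set_integral_eq_integral_bounded[where B="ess_bound X + \<bar>t\<bar>"])
    fix u
    show "\<bar>?g (quantile X u)\<bar> \<le> ess_bound X + \<bar>t\<bar>"
      using abs_quantile_le[OF X, of u] ess_bound(1)[OF X] by (auto simp: abs_le_iff max_def)
  qed measurable
  finally show ?thesis .
qed

lemma expectation_excess_convex:
  assumes X: "X \<in> Linf M" and Y: "Y \<in> Linf M" and \<gamma>: "0 \<le> \<gamma>" "\<gamma> \<le> 1"
  shows "expectation (\<lambda>\<omega>. max (\<gamma> * X \<omega> + (1 - \<gamma>) * Y \<omega> - (\<gamma> * x + (1 - \<gamma>) * y)) 0)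
    \<le> \<gamma> * expectation (\<lambda>\<omega>. max (X \<omega> - x) 0) + (1 - \<gamma>) * expectation (\<lambda>\<omega>. max (Y \<omega> - y) 0)"
proof -
  have "expectation (\<lambda>\<omega>. max (\<gamma> * X \<omega> + (1 - \<gamma>) * Y \<omega> - (\<gamma> * x + (1 - \<gamma>) * y)) 0)
      \<le> expectation (\<lambda>\<omega>. \<gamma> * max (X \<omega> - x) 0 + (1 - \<gamma>) * max (Y \<omega> - y) 0)"
  proof (rule integral_mono)
    fix \<omega>
    show "max (\<gamma> * X \<omega> + (1 - \<gamma>) * Y \<omega> - (\<gamma> * x + (1 - \<gamma>) * y)) 0
        \<le> \<gamma> * max (X \<omega> - x) 0 + (1 - \<gamma>) * max (Y \<omega> - y) 0"
      using max_0_convex[OF \<gamma>, of "X \<omega> - x" "Y \<omega> - y"] by (simp add: algebra_simps)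
  next
    show "integrable M (\<lambda>\<omega>. max (\<gamma> * X \<omega> + (1 - \<gamma>) * Y \<omega> - (\<gamma> * x + (1 - \<gamma>) * y)) 0)"
      by (rule integrable_excess[OF Linf_lincomb[OF X Y]])
  qed (use integrable_excess[OF X] integrable_excess[OF Y] in simp)
  also have "\<dots> = \<gamma> * expectation (\<lambda>\<omega>. max (X \<omega> - x) 0) + (1 - \<gamma>) * expectation (\<lambda>\<omega>. max (Y \<omega> - y) 0)"
    using integrable_excess[OF X] integrable_excess[OF Y] by simp
  finally show ?thesis .
qed

lemma integral_quantile_convex:
  assumes X: "X \<in> Linf M" and Y: "Y \<in> Linf M" and \<gamma>: "0 \<le> \<gamma>" "\<gamma> \<le> 1" and a: "0 \<le> a" "a \<le> 1"
  defines "Z \<equiv> \<lambda>\<omega>. \<gamma> * X \<omega> + (1 - \<gamma>) * Y \<omega>"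
  shows "integral {a..1} (quantile Z)
    \<le> \<gamma> * integral {a..1} (quantile X) + (1 - \<gamma>) * integral {a..1} (quantile Y)"
proof -
  have Z: "Z \<in> Linf M"
    unfolding Z_def by (rule Linf_lincomb[OF X Y])
  define x where "x = quantile X a"
  define y where "y = quantile Y a"
  let ?t = "\<gamma> * x + (1 - \<gamma>) * y"
  have "integral {a..1} (quantile Z) \<le> (1 - a) * ?t + expectation (\<lambda>\<omega>. max (Z \<omega> - ?t) 0)"
    unfolding expectation_excess[OF Z] by (rule integral_tail_le_excess[OF mono_quantile[OF Z] a])
  also have "expectation (\<lambda>\<omega>. max (Z \<omega> - ?t) 0)
      \<le> \<gamma> * expectation (\<lambda>\<omega>. max (X \<omega> - x) 0) + (1 - \<gamma>) * expectation (\<lambda>\<omega>. max (Y \<omega> - y) 0)"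
    unfolding Z_def by (rule expectation_excess_convex[OF X Y \<gamma>])
  also have "expectation (\<lambda>\<omega>. max (X \<omega> - x) 0) = integral {a..1} (quantile X) - (1 - a) * x"
    unfolding expectation_excess[OF X] x_def
    using integral_tail_eq_excess[OF mono_quantile[OF X] a] by simp
  also have "expectation (\<lambda>\<omega>. max (Y \<omega> - y) 0) = integral {a..1} (quantile Y) - (1 - a) * y"
    unfolding expectation_excess[OF Y] y_def
    using integral_tail_eq_excess[OF mono_quantile[OF Y] a] by simp
  finally show ?thesis
    by (simp add: algebra_simps)
qed

lemma quantile_1_le_iff:
  assumes X: "X \<in> Linf M"
  shows "quantile X 1 \<le> m \<longleftrightarrow> (AE \<omega> in M. X \<omega> \<le> m)"
proof -
  have "{\<omega>\<in>space M. X \<omega> \<le> m} \<in> events"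
    using Linf_measurable[OF X] by measurable
  then have "(AE \<omega> in M. X \<omega> \<le> m) \<longleftrightarrow> 1 \<le> cdf_rv M X m"
    unfolding cdf_rv_def using prob_Collect_eq_1 prob_le_1 by (metis antisym)
  then show ?thesis
    using quantile_le_iff[OF X, of 1 m] by simp
qed

lemma ES_convex_combination_le:
  assumes X: "X \<in> Linf M" and Y: "Y \<in> Linf M" and \<gamma>: "0 \<le> \<gamma>" "\<gamma> \<le> 1" and a: "0 \<le> a" "a \<le> 1"
  shows "ES M a (\<lambda>\<omega>. \<gamma> * X \<omega> + (1 - \<gamma>) * Y \<omega>) \<le> max (ES M a X) (ES M a Y)"
proof -
  define Z where "Z = (\<lambda>\<omega>. \<gamma> * X \<omega> + (1 - \<gamma>) * Y \<omega>)"
  have Z: "Z \<in> Linf M"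
    unfolding Z_def by (rule Linf_lincomb[OF X Y])
  have "ES M a Z \<le> max (ES M a X) (ES M a Y)"
  proof (cases "a = 1")
    case True
    define m where "m = max (quantile X 1) (quantile Y 1)"
    have "AE \<omega> in M. X \<omega> \<le> m" "AE \<omega> in M. Y \<omega> \<le> m"
      unfolding quantile_1_le_iff[OF X, symmetric] quantile_1_le_iff[OF Y, symmetric]
      by (simp_all add: m_def)
    then have "AE \<omega> in M. Z \<omega> \<le> m"
    proof eventually_elim
      case (elim \<omega>)
      then show ?case
        unfolding Z_def using \<gamma> convex_bound_le[of "X \<omega>" m "Y \<omega>" \<gamma> "1 - \<gamma>"] by simp
    qed
    then have "quantile Z 1 \<le> m"
      using quantile_1_le_iff[OF Z] by simp
    then show ?thesis
      using True by (simp add: ES_1 X Y Z m_def max_def split: if_splits)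
  next
    case False
    let ?IX = "integral {a..1} (quantile X)" and ?IY = "integral {a..1} (quantile Y)"
    have "integral {a..1} (quantile Z) \<le> \<gamma> * ?IX + (1 - \<gamma>) * ?IY"
      unfolding Z_def by (rule integral_quantile_convex[OF X Y \<gamma> a])
    also have "\<dots> \<le> max ?IX ?IY"
      using \<gamma> convex_bound_le[of ?IX "max ?IX ?IY" ?IY \<gamma> "1 - \<gamma>"] by simp
    finally have "integral {a..1} (quantile Z) / (1 - a) \<le> max ?IX ?IY / (1 - a)"
      using a by (simp add: divide_right_mono)
    then have "integral {a..1} (quantile Z) / (1 - a) \<le> max (?IX / (1 - a)) (?IY / (1 - a))"
      using a by (simp add: max_divide_distrib_right)
    then show ?thesis
      using False a by (simp add: ES_eq_integral_quantile X Y Z flip: ereal_max)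
  qed
  then show ?thesis
    unfolding Z_def .
qed

lemma quasi_convex_ES_Lambda:
  assumes "\<And>x. 0 \<le> \<Lambda> x \<and> \<Lambda> x \<le> 1"
  shows "quasi_convex M (ES_Lambda M \<Lambda>)"
  unfolding quasi_convex_def ES_Lambda_def
proof (intro ballI SUP_least)
  fix X Y \<gamma> x assume X: "X \<in> Linf M" and Y: "Y \<in> Linf M" and \<gamma>: "\<gamma> \<in> {0..1::real}"
  let ?Z = "\<lambda>\<omega>. \<gamma> * X \<omega> + (1 - \<gamma>) * Y \<omega>"
  have "min (ES M (\<Lambda> x) ?Z) (ereal x) \<le> min (max (ES M (\<Lambda> x) X) (ES M (\<Lambda> x) Y)) (ereal x)"
    using ES_convex_combination_le[OF X Y _ _ ] \<gamma> assms[of x] by (intro min.mono) auto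
  also have "\<dots> = max (min (ES M (\<Lambda> x) X) (ereal x)) (min (ES M (\<Lambda> x) Y) (ereal x))"
    by (rule min_max_distrib1)
  also have "\<dots> \<le> max (SUP x. min (ES M (\<Lambda> x) X) (ereal x)) (SUP x. min (ES M (\<Lambda> x) Y) (ereal x))"
    by (intro max.mono SUP_upper) simp_all
  finally show "min (ES M (\<Lambda> x) ?Z) (ereal x)
      \<le> max (SUP x. min (ES M (\<Lambda> x) X) (ereal x)) (SUP x. min (ES M (\<Lambda> x) Y) (ereal x))" .
qed

lemma law_invariant_ES_Lambda: "law_invariant M (ES_Lambda M \<Lambda>)"
  unfolding law_invariant_def
proof (intro ballI impI)
  fix X Y assume "X \<in> Linf M" "Y \<in> Linf M" "distr M borel X = distr M borel Y"
  then have cdf: "cdf_rv M X = cdf_rv M Y"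
    by (simp add: cdf_rv_eq_cdf_distr Linf_measurable)
  show "ES_Lambda M \<Lambda> X = ES_Lambda M \<Lambda> Y"
    unfolding ES_Lambda_def ES_def VaR_def cdf ..
qed

end

section \<open>Comparison with the Lambda-quantiles\<close>

lemma ereal_le_by_reals:
  fixes a b :: ereal
  assumes "\<And>s. ereal s < a \<Longrightarrow> ereal s \<le> b"
  shows "a \<le> b"
proof (rule ccontr)
  assume "\<not> a \<le> b"
  then obtain s where "b < ereal s" "ereal s < a"
    using ereal_dense2 by (meson not_le)
  then show False
    using assms by (meson not_le)
qed

lemma SUP_min_eq_INF_max:
  fixes f :: "real \<Rightarrow> ereal"
  assumes antimono: "\<And>x y. x \<le> y \<Longrightarrow> f y \<le> f x"
  shows "(SUP x. min (f x) (ereal x)) = (INF x. max (f x) (ereal x))"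
proof (rule antisym)
  have "min (f x) (ereal x) \<le> max (f y) (ereal y)" for x y
  proof (cases "x \<le> y")
    case True
    then show ?thesis
      by (simp add: le_max_iff_disj min_le_iff_disj)
  next
    case False
    then show ?thesis
      using antimono[of y x] by (simp add: le_max_iff_disj min_le_iff_disj)
  qed
  then show "(SUP x. min (f x) (ereal x)) \<le> (INF x. max (f x) (ereal x))"
    by (intro SUP_least INF_greatest)
  show "(INF x. max (f x) (ereal x)) \<le> (SUP x. min (f x) (ereal x))"
  proof (rule ccontr)
    assume "\<not> ?thesis"
    then obtain t where t: "(SUP x. min (f x) (ereal x)) < ereal t" "ereal t < (INF x. max (f x) (ereal x))"
      using ereal_dense2 by (meson not_le)
    have "min (f t) (ereal t) < ereal t"
      using t(1) SUP_upper[of t UNIV "\<lambda>x. min (f x) (ereal x)"] by simp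
    moreover have "ereal t < max (f t) (ereal t)"
      using t(2) INF_lower[of t UNIV "\<lambda>x. max (f x) (ereal x)"] by simp
    ultimately show False
      by (simp add: min_def max_def split: if_splits)
  qed
qed

context prob_space
begin

lemma ES_Lambda_eq_INF:
  assumes X: "X \<in> Linf M" and \<Lambda>: "antimono \<Lambda>" "\<And>x. 0 \<le> \<Lambda> x \<and> \<Lambda> x \<le> 1"
  shows "ES_Lambda M \<Lambda> X = (INF x. max (ES M (\<Lambda> x) X) (ereal x))"
  unfolding ES_Lambda_def
proof (rule SUP_min_eq_INF_max)
  fix x y :: real assume "x \<le> y"
  then show "ES M (\<Lambda> y) X \<le> ES M (\<Lambda> x) X"
    using \<Lambda> ES_mono[OF X] by (simp add: antimono_def)
qed

lemma le_ES_Lambda: "ereal x \<le> ES M (\<Lambda> x) X \<Longrightarrow> ereal x \<le> ES_Lambda M \<Lambda> X"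
  unfolding ES_Lambda_def by (rule SUP_upper2[of x]) simp_all

lemma VaR_Lambda_le_ES_Lambda:
  assumes X: "X \<in> Linf M" and \<Lambda>: "\<And>x. 0 < \<Lambda> x \<and> \<Lambda> x \<le> 1"
  shows "VaR_Lambda M \<Lambda> X \<le> ES_Lambda M \<Lambda> X"
proof (rule ereal_le_by_reals)
  fix s assume s: "ereal s < VaR_Lambda M \<Lambda> X"
  have "\<not> \<Lambda> s \<le> cdf_rv M X s"
  proof
    assume "\<Lambda> s \<le> cdf_rv M X s"
    then have "VaR_Lambda M \<Lambda> X \<le> ereal s"
      unfolding VaR_Lambda_def by (intro Inf_lower) auto
    then show False
      using s by simp
  qed
  then have "s \<le> quantile X (\<Lambda> s)"
    using quantile_le_iff[OF X, of "\<Lambda> s" s] \<Lambda>[of s] by auto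
  then have "ereal s \<le> ES M (\<Lambda> s) X"
    using quantile_le_ES[OF X, of "\<Lambda> s"] \<Lambda>[of s] by (meson ereal_less_eq(3) order_trans less_imp_le)
  then show "ereal s \<le> ES_Lambda M \<Lambda> X"
    by (rule le_ES_Lambda)
qed

lemma VaR_Lambda_plus_le_ES_Lambda:
  assumes X: "X \<in> Linf M" and \<Lambda>: "\<And>x. 0 \<le> \<Lambda> x \<and> \<Lambda> x < 1"
  shows "VaR_Lambda_plus M \<Lambda> X \<le> ES_Lambda M \<Lambda> X"
proof (rule ereal_le_by_reals)
  fix s assume s: "ereal s < VaR_Lambda_plus M \<Lambda> X"
  have "cdf_rv M X s \<le> \<Lambda> s"
  proof (rule ccontr)
    assume "\<not> cdf_rv M X s \<le> \<Lambda> s"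
    then have "VaR_Lambda_plus M \<Lambda> X \<le> ereal s"
      unfolding VaR_Lambda_plus_def by (intro Inf_lower) auto
    then show False
      using s by simp
  qed
  then have "ereal s \<le> ES M (\<Lambda> s) X"
    using ES_ge_of_cdf_rv_le[OF X] \<Lambda>[of s] by simp
  then show "ereal s \<le> ES_Lambda M \<Lambda> X"
    by (rule le_ES_Lambda)
qed

lemma le_VaR_Lambda:
  assumes "\<And>y. y < s \<Longrightarrow> cdf_rv M Y y < \<Lambda> y"
  shows "ereal s \<le> VaR_Lambda M \<Lambda> Y"
  unfolding VaR_Lambda_def
proof (rule Inf_greatest)
  fix z assume "z \<in> {ereal x |x. \<Lambda> x \<le> cdf_rv M Y x}"
  then show "ereal s \<le> z"
    using assms by (auto simp: not_less[symmetric])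
qed

lemma le_VaR_Lambda_plus:
  assumes "\<And>y. y < s \<Longrightarrow> cdf_rv M Y y \<le> \<Lambda> y"
  shows "ereal s \<le> VaR_Lambda_plus M \<Lambda> Y"
  unfolding VaR_Lambda_plus_def
proof (rule Inf_greatest)
  fix z assume "z \<in> {ereal x |x. \<Lambda> x < cdf_rv M Y x}"
  then show "ereal s \<le> z"
    using assms by (auto simp: not_less[symmetric])
qed

end

section \<open>Minimality\<close>

lemma exists_nat_divide_less:
  fixes a c :: real
  assumes "0 \<le> a" "0 < c"
  obtains n :: nat where "0 < n" "a / real n < c"
proof -
  obtain n :: nat where n: "a / c < real n"
    using reals_Archimedean2 by blast
  moreover have "0 \<le> a / c"
    using assms by simp
  ultimately have "0 < real n"
    by linarith
  then show thesis
    using that[of n] n assms by (simp add: field_simps)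
qed

lemma average_Suc:
  fixes x :: "nat \<Rightarrow> real"
  assumes "0 < m"
  defines "\<gamma> \<equiv> real m / real (Suc m)"
  shows "(\<Sum>i<Suc m. x i) / real (Suc m) = \<gamma> * ((\<Sum>i<m. x i) / real m) + (1 - \<gamma>) * x m"
proof -
  have "\<gamma> * ((\<Sum>i<m. x i) / real m) = (\<Sum>i<m. x i) / real (Suc m)"
    unfolding \<gamma>_def using assms by simp
  moreover have "1 - \<gamma> = 1 / real (Suc m)"
    unfolding \<gamma>_def by (simp add: field_simps)
  ultimately show ?thesis
    by (simp add: add_divide_distrib)
qed

definition tail_shift :: "real \<Rightarrow> real \<Rightarrow> real \<Rightarrow> real" where
  "tail_shift b d u = (if u < b then u else if u + d < 1 then u + d else u + d - (1 - b))"

lemma borel_measurable_tail_shift [measurable]: "tail_shift b d \<in> borel_measurable borel"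
  unfolding tail_shift_def by measurable

lemma measure_tail_shift_le:
  assumes b: "0 \<le> b" "b < 1" and d: "0 \<le> d" "d < 1 - b"
  shows "measure lborel ({0..1} \<inter> {u. tail_shift b d u \<le> t}) = max 0 (min 1 t)"
proof -
  let ?S = "{0..1} \<inter> {u. tail_shift b d u \<le> t}"
  consider "t < 0" | "0 \<le> t" "t < b" | "b \<le> t" "t < 1" "d \<le> t - b" | "b \<le> t" "t < 1" "t - b < d"
    | "1 \<le> t"
    by linarith
  then show ?thesis
  proof cases
    case 1
    then have "?S = {}"
      using b d unfolding tail_shift_def by auto
    then show ?thesis
      using 1 by simp
  next
    case 2
    then have "?S = {0..t}"
      using b d unfolding tail_shift_def by (auto split: if_splits)
    then show ?thesis
      using 2 b by simp
  next
    case 3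
    then have "?S = {0..t - d} \<union> {1 - d..1}"
      using b d unfolding tail_shift_def by (auto split: if_splits)
    moreover have "measure lborel ({0..t - d} \<union> {1 - d..1}) = measure lborel {0..t - d} + measure lborel {1 - d..1}"
      using 3 b d by (intro measure_Union) auto
    ultimately show ?thesis
      using 3 b d by simp
  next
    case 4
    then have "?S = {0..<b} \<union> {1 - d..1 - d + (t - b)}"
      using b d unfolding tail_shift_def by (auto split: if_splits)
    moreover have "measure lborel ({0..<b} \<union> {1 - d..1 - d + (t - b)})
        = measure lborel {0..<b} + measure lborel {1 - d..1 - d + (t - b)}"
      using 4 b d by (intro measure_Union) auto
    ultimately show ?thesis
      using 4 b d by simp
  next
    case 5
    then have "?S = {0..1}"
      using b d unfolding tail_shift_def by (auto split: if_splits)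
    then show ?thesis
      using 5 by simp
  qed
qed

lemma distr_tail_shift:
  assumes "0 \<le> b" "b < 1" "0 \<le> d" "d < 1 - b"
  shows "distr unit_uniform borel (tail_shift b d) = unit_uniform"
  using measure_tail_shift_le[OF assms]
  by (intro distr_eq_unit_uniform prob_space_unit_uniform) (simp_all add: measure_unit_uniform)

lemma sum_rotate_index:
  fixes f :: "nat \<Rightarrow> real"
  assumes "0 < n"
  shows "(\<Sum>i<n. f ((k + i) mod n)) = (\<Sum>j<n. f j)"
proof (rule sum.reindex_bij_betw)
  have inj: "inj_on (\<lambda>i. (k + i) mod n) {..<n}"
    by (rule inj_onI) (use mod_eq_iff_dvd_symdiff_nat in force)
  moreover have "(\<lambda>i. (k + i) mod n) ` {..<n} \<subseteq> {..<n}"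
    using assms by auto
  ultimately show "bij_betw (\<lambda>i. (k + i) mod n) {..<n} {..<n}"
    unfolding bij_betw_def using endo_inj_surj by blast
qed

lemma exists_grid_cell:
  assumes h: "0 < h" and u: "b \<le> u" "u < b + real n * h"
  obtains k where "k < n" "b + real k * h \<le> u" "u < b + real (Suc k) * h"
proof -
  define k where "k = nat \<lfloor>(u - b) / h\<rfloor>"
  have "real k = of_int \<lfloor>(u - b) / h\<rfloor>"
    unfolding k_def using u h by simp
  then have "real k \<le> (u - b) / h" "(u - b) / h < real k + 1"
    by linarith+
  then have k: "real k * h \<le> u - b" "u - b < (real k + 1) * h"
    using h by (simp_all add: field_simps)
  then have "real k * h < real n * h"
    using u by linarith
  then have "k < n"
    using h by simp
  then show ?thesis
    using that k by (simp add: algebra_simps)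
qed

lemma tail_shift_grid_lower:
  assumes h: "0 < h" and n: "b + real n * h = 1" and i: "i < n" and k: "k < n"
    and u: "b + real k * h \<le> u" "u < b + real (Suc k) * h"
  shows "b + real ((k + i) mod n) * h \<le> tail_shift b (real i * h) u"
proof -
  have "0 \<le> real k * h"
    using h by simp
  then have "\<not> u < b"
    using u(1) by linarith
  then show ?thesis
  proof (cases "k + i < n")
  case True
  then have "real (k + i + 1) * h \<le> real n * h"
    using h by (intro mult_right_mono) auto
  then have "u + real i * h < 1"
    using u(2) n by (simp add: algebra_simps)
  then show ?thesis
    unfolding tail_shift_def using True u(1) h \<open>\<not> u < b\<close> by (simp add: algebra_simps)
next
  case False
  then have "real n * h \<le> real (k + i) * h"
    using h by (intro mult_right_mono) auto
  then have "\<not> u + real i * h < 1"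
    using u(1) n by (simp add: algebra_simps)
  moreover have "(k + i) mod n = k + i - n" "real (k + i - n) = real k + real i - real n"
    using False i k by (simp_all add: mod_if)
  ultimately show ?thesis
    unfolding tail_shift_def using u(1) h n \<open>\<not> u < b\<close> by (simp add: algebra_simps)
qed
qed

lemma sum_tail_shift_lower:
  fixes Q :: "real \<Rightarrow> real"
  assumes Q: "mono Q" and h: "0 < h" and n: "0 < n" "b + real n * h = 1" and u: "b \<le> u" "u < 1"
  shows "(\<Sum>j<n. Q (b + real j * h)) \<le> (\<Sum>i<n. Q (tail_shift b (real i * h) u))"
proof -
  obtain k where k: "k < n" "b + real k * h \<le> u" "u < b + real (Suc k) * h"
    using exists_grid_cell[OF h u(1), of n] u(2) n(2) by auto
  have "(\<Sum>j<n. Q (b + real j * h)) = (\<Sum>i<n. Q (b + real ((k + i) mod n) * h))"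
    using sum_rotate_index[OF n(1), of "\<lambda>j. Q (b + real j * h)" k] by simp
  also have "\<dots> \<le> (\<Sum>i<n. Q (tail_shift b (real i * h) u))"
    using tail_shift_grid_lower[OF h n(2) _ k] by (intro sum_mono monoD[OF Q]) simp
  finally show ?thesis .
qed

lemma integral_le_upper_Riemann_sum:
  fixes f :: "real \<Rightarrow> real"
  assumes f: "mono f" and h: "0 \<le> h"
  shows "integral {a..a + real m * h} f \<le> h * (\<Sum>j<m. f (a + real (Suc j) * h))"
proof (induction m)
  case (Suc m)
  have le: "a \<le> a + real m * h" "a + real m * h \<le> a + real (Suc m) * h"
    using h by (simp_all add: algebra_simps)
  have "integral {a..a + real (Suc m) * h} f
      = integral {a..a + real m * h} f + integral {a + real m * h..a + real (Suc m) * h} f"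
    using Henstock_Kurzweil_Integration.integral_combine[OF le mono_integrable_on[OF f]] by simp
  also have "integral {a + real m * h..a + real (Suc m) * h} f \<le> h * f (a + real (Suc m) * h)"
    using mono_integral_bounds(2)[OF f le(2)] by (simp add: algebra_simps)
  finally show ?case
    using Suc.IH by (simp add: distrib_left)
qed simp

lemma average_grid_lower:
  fixes Q :: "real \<Rightarrow> real"
  assumes Q: "mono Q" "\<And>u. \<bar>Q u\<bar> \<le> B" and n: "0 < n" and b: "b < 1"
  defines "h \<equiv> (1 - b) / real n"
  shows "integral {b..1} Q / (1 - b) - 2 * B / real n \<le> (\<Sum>j<n. Q (b + real j * h)) / real n"
proof -
  have h: "0 < h" "b + real n * h = 1"
    unfolding h_def using n b by simp_all
  have "integral {b..1} Q \<le> h * (\<Sum>j<n. Q (b + real (Suc j) * h))"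
    using integral_le_upper_Riemann_sum[OF Q(1), of h b n] h by simp
  also have "(\<Sum>j<n. Q (b + real (Suc j) * h)) = (\<Sum>j<n. Q (b + real j * h)) + (Q 1 - Q b)"
    using sum_lessThan_telescope[of "\<lambda>j. Q (b + real j * h)" n] h(2)
    by (simp add: sum_subtractf)
  also have "\<dots> \<le> (\<Sum>j<n. Q (b + real j * h)) + 2 * B"
    using Q(2)[of 1] Q(2)[of b] by (simp add: abs_le_iff)
  finally have "integral {b..1} Q / (real n * h) \<le> ((\<Sum>j<n. Q (b + real j * h)) + 2 * B) / real n"
    using h n by (simp add: field_simps)
  moreover have "real n * h = 1 - b"
    using h(2) by simp
  ultimately show ?thesis
    by (simp add: add_divide_distrib)
qed

lemma average_tail_shift_lower:
  fixes Q :: "real \<Rightarrow> real"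
  assumes Q: "mono Q" "\<And>u. \<bar>Q u\<bar> \<le> B" and n: "0 < n" and u: "b \<le> u" "u < 1"
  defines "h \<equiv> (1 - b) / real n"
  shows "integral {b..1} Q / (1 - b) - 2 * B / real n \<le> (\<Sum>i<n. Q (tail_shift b (real i * h) u)) / real n"
proof -
  have h: "0 < h" "b + real n * h = 1"
    unfolding h_def using n u by simp_all
  have "(\<Sum>j<n. Q (b + real j * h)) \<le> (\<Sum>i<n. Q (tail_shift b (real i * h) u))"
    by (rule sum_tail_shift_lower[OF Q(1) h(1) n h(2) u])
  then have "(\<Sum>j<n. Q (b + real j * h)) / real n \<le> (\<Sum>i<n. Q (tail_shift b (real i * h) u)) / real n"
    by (simp add: divide_right_mono)
  moreover have "integral {b..1} Q / (1 - b) - 2 * B / real n \<le> (\<Sum>j<n. Q (b + real j * h)) / real n"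
    unfolding h_def using Q n u by (intro average_grid_lower) simp_all
  ultimately show ?thesis
    by linarith
qed

context prob_space
begin

lemma average_le_if_quasi_convex:
  assumes qc: "quasi_convex M \<rho>" and li: "law_invariant M \<rho>" and X: "X \<in> Linf M"
    and Xs: "\<And>i. i < n \<Longrightarrow> Xs i \<in> Linf M \<and> distr M borel (Xs i) = distr M borel X"
    and n: "0 < n"
  shows "(\<lambda>\<omega>. (\<Sum>i<n. Xs i \<omega>) / real n) \<in> Linf M \<and> \<rho> (\<lambda>\<omega>. (\<Sum>i<n. Xs i \<omega>) / real n) \<le> \<rho> X"
  using n Xs
proof (induction n rule: nat_induct_non_zero)
  case 1
  then have "Xs 0 \<in> Linf M" "distr M borel (Xs 0) = distr M borel X"
    by simp_all
  moreover from this have "\<rho> (Xs 0) = \<rho> X"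
    using law_invariantD[OF li _ X] by blast
  ultimately show ?case
    by simp
next
  case (Suc m)
  let ?A = "\<lambda>\<omega>. (\<Sum>i<m. Xs i \<omega>) / real m"
  define \<gamma> where "\<gamma> = real m / real (Suc m)"
  have A: "?A \<in> Linf M" "\<rho> ?A \<le> \<rho> X"
    using Suc by simp_all
  have "Xs m \<in> Linf M" "distr M borel (Xs m) = distr M borel X"
    using Suc.prems by simp_all
  moreover from this have "\<rho> (Xs m) = \<rho> X"
    using law_invariantD[OF li _ X] by blast
  ultimately have Xm: "Xs m \<in> Linf M" "\<rho> (Xs m) = \<rho> X"
    by simp_all
  have \<gamma>: "\<gamma> \<in> {0..1}"
    unfolding \<gamma>_def by simp
  have avg: "(\<lambda>\<omega>. (\<Sum>i<Suc m. Xs i \<omega>) / real (Suc m)) = (\<lambda>\<omega>. \<gamma> * ?A \<omega> + (1 - \<gamma>) * Xs m \<omega>)"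
    unfolding \<gamma>_def by (rule ext, rule average_Suc[OF Suc.hyps])
  have "\<rho> (\<lambda>\<omega>. \<gamma> * ?A \<omega> + (1 - \<gamma>) * Xs m \<omega>) \<le> max (\<rho> ?A) (\<rho> (Xs m))"
    by (rule quasi_convexD[OF qc A(1) Xm(1) \<gamma>])
  also have "\<dots> \<le> \<rho> X"
    using A(2) Xm(2) by simp
  finally show ?case
    unfolding avg using Linf_lincomb[OF A(1) Xm(1)] by simp
qed

lemma quantile_comp_Linf:
  assumes "X \<in> Linf M" "g \<in> borel_measurable M"
  shows "(\<lambda>\<omega>. quantile X (g \<omega>)) \<in> Linf M"
  unfolding Linf_def using assms abs_quantile_le[OF assms(1)] by auto

lemma distr_quantile_tail_shift:
  assumes X: "X \<in> Linf M" and U: "U \<in> borel_measurable M" "distr M borel U = unit_uniform"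
    and bd: "0 \<le> b" "b < 1" "0 \<le> d" "d < 1 - b"
  shows "distr M borel (\<lambda>\<omega>. quantile X (tail_shift b d (U \<omega>))) = distr M borel X"
proof -
  have [measurable]: "quantile X \<in> borel_measurable borel"
    using X by simp
  have "distr M borel (\<lambda>\<omega>. quantile X (tail_shift b d (U \<omega>)))
      = distr (distr (distr M borel U) borel (tail_shift b d)) borel (quantile X)"
    using U(1) by (simp add: distr_distr comp_def)
  also have "\<dots> = distr unit_uniform borel (quantile X)"
    unfolding U(2) distr_tail_shift[OF bd] ..
  finally show ?thesis
    using distr_quantile[OF X] by simp
qed

text \<open>The copies of X are the quantile function applied to shifts of U along [b, 1); on the event
  that U lies in [b, 1), their values run through a full grid of the tail, so the average is at
  least a Riemann sum of the quantile function over [b, 1].\<close>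

lemma average_tail_shifts:
  assumes qc: "quasi_convex M \<rho>" and li: "law_invariant M \<rho>" and X: "X \<in> Linf M"
    and U: "U \<in> borel_measurable M" "distr M borel U = unit_uniform"
    and b: "0 \<le> b" "b < 1" and s: "s < integral {b..1} (quantile X) / (1 - b)"
  obtains Y where "Y \<in> Linf M" "\<rho> Y \<le> \<rho> X"
    "\<And>\<omega>. \<omega> \<in> space M \<Longrightarrow> b \<le> U \<omega> \<Longrightarrow> U \<omega> < 1 \<Longrightarrow> s < Y \<omega>"
proof -
  let ?B = "ess_bound X" and ?I = "integral {b..1} (quantile X)"
  obtain n where n: "0 < n" "2 * ?B / real n < ?I / (1 - b) - s"
    using exists_nat_divide_less[of "2 * ?B" "?I / (1 - b) - s"] ess_bound(1)[OF X] s by auto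
  define h where "h = (1 - b) / real n"
  have h: "0 < h" "b + real n * h = 1"
    unfolding h_def using n b by simp_all
  define Xs where "Xs i = (\<lambda>\<omega>. quantile X (tail_shift b (real i * h) (U \<omega>)))" for i
  have "Xs i \<in> Linf M \<and> distr M borel (Xs i) = distr M borel X" if "i < n" for i
  proof
    show "Xs i \<in> Linf M"
      unfolding Xs_def using X U(1) by (intro quantile_comp_Linf) simp_all
    have "real i * h < real n * h"
      using that h(1) by simp
    then have "real i * h < 1 - b"
      using h(2) by linarith
    then show "distr M borel (Xs i) = distr M borel X"
      unfolding Xs_def using h b by (intro distr_quantile_tail_shift[OF X U]) simp_all
  qed
  then have Y: "(\<lambda>\<omega>. (\<Sum>i<n. Xs i \<omega>) / real n) \<in> Linf M"
    "\<rho> (\<lambda>\<omega>. (\<Sum>i<n. Xs i \<omega>) / real n) \<le> \<rho> X"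
    using average_le_if_quasi_convex[OF qc li X _ n(1)] by blast+
  show ?thesis
  proof (rule that[OF Y])
    fix \<omega> assume "b \<le> U \<omega>" "U \<omega> < 1"
    then have "?I / (1 - b) - 2 * ?B / real n \<le> (\<Sum>i<n. Xs i \<omega>) / real n"
      unfolding Xs_def h_def using abs_quantile_le[OF X]
      by (intro average_tail_shift_lower mono_quantile[OF X] n(1))
    then show "s < (\<Sum>i<n. Xs i \<omega>) / real n"
      using n(2) by linarith
  qed
qed

end

context atomless_prob_space
begin

lemma exists_le_with_small_cdf_rv:
  assumes qc: "quasi_convex M \<rho>" and li: "law_invariant M \<rho>" and X: "X \<in> Linf M"
    and b: "0 \<le> b" "b < 1" and s: "s < integral {b..1} (quantile X) / (1 - b)"
  obtains Y where "Y \<in> Linf M" "\<rho> Y \<le> \<rho> X" "\<And>y. y < s \<Longrightarrow> cdf_rv M Y y \<le> b"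
proof -
  obtain U where U: "U \<in> borel_measurable M" "distr M borel U = unit_uniform"
    "\<And>\<omega>. \<omega> \<in> space M \<Longrightarrow> U \<omega> \<in> {0..1}"
    using exists_unit_uniform by blast
  obtain Y where Y: "Y \<in> Linf M" "\<rho> Y \<le> \<rho> X"
    "\<And>\<omega>. \<omega> \<in> space M \<Longrightarrow> b \<le> U \<omega> \<Longrightarrow> U \<omega> < 1 \<Longrightarrow> s < Y \<omega>"
    using average_tail_shifts[OF qc li X U(1,2) b s] by blast
  have "cdf_rv M Y y \<le> b" if y: "y < s" for y
  proof -
    let ?A = "{..<b} \<union> {1::real}"
    have "{\<omega>\<in>space M. Y \<omega> \<le> y} \<subseteq> U -` ?A \<inter> space M"
      using Y(3) U(3) y by fastforce
    then have "cdf_rv M Y y \<le> measure M (U -` ?A \<inter> space M)"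
      unfolding cdf_rv_def using U(1) by (intro finite_measure_mono) auto
    also have "\<dots> = measure unit_uniform ?A"
      using U by (subst measure_distr[symmetric]) auto
    also have "\<dots> = measure lborel ({0..<b} \<union> {1})"
      using b by (subst measure_unit_uniform) (auto intro!: arg_cong[where f="measure lborel"])
    also have "\<dots> = b"
      using b by (subst measure_Union) auto
    finally show ?thesis .
  qed
  then show ?thesis
    using that Y(1,2) by blast
qed

lemma exists_le_with_cdf_rv_less:
  assumes qc: "quasi_convex M \<rho>" and li: "law_invariant M \<rho>" and X: "X \<in> Linf M"
    and a: "0 < a" "a \<le> 1" and s: "ereal s < ES M a X"
  obtains Y where "Y \<in> Linf M" "\<rho> Y \<le> \<rho> X" "\<And>y. y < s \<Longrightarrow> cdf_rv M Y y < a"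
proof (cases "a = 1")
  case True
  then have "s < quantile X 1"
    using s ES_1[OF X] by simp
  then have "cdf_rv M X y < a" if "y < s" for y
    using quantile_le_iff[OF X, of 1 y] that True by (simp add: not_le[symmetric])
  then show ?thesis
    using that[OF X order_refl] by blast
next
  case False
  then have a1: "a < 1"
    using a(2) by simp
  then have "s < integral {a..1} (quantile X) / (1 - a)"
    using s ES_eq_integral_quantile[OF X] a(1) by simp
  then obtain b where b: "0 \<le> b" "b < a" "s < integral {b..1} (quantile X) / (1 - b)"
    by (rule ES_tail_average_left_continuous[OF X a(1) a1])
  moreover have "b < 1"
    using b(2) a1 by simp
  ultimately obtain Y where "Y \<in> Linf M" "\<rho> Y \<le> \<rho> X" "\<And>y. y < s \<Longrightarrow> cdf_rv M Y y \<le> b"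
    using exists_le_with_small_cdf_rv[OF qc li X] by metis
  then show ?thesis
    using that b(2) by (meson le_less_trans)
qed

lemma ES_Lambda_le_if_VaR_Lambda_le:
  assumes \<Lambda>: "antimono \<Lambda>" "\<And>x. 0 < \<Lambda> x \<and> \<Lambda> x \<le> 1"
    and qc: "quasi_convex M \<rho>" and li: "law_invariant M \<rho>"
    and dom: "\<And>X. X \<in> Linf M \<Longrightarrow> VaR_Lambda M \<Lambda> X \<le> \<rho> X"
    and X: "X \<in> Linf M"
  shows "ES_Lambda M \<Lambda> X \<le> \<rho> X"
  unfolding ES_Lambda_def
proof (rule SUP_least, rule ereal_le_by_reals)
  fix x s assume "ereal s < min (ES M (\<Lambda> x) X) (ereal x)"
  then have sx: "s < x" and sES: "ereal s < ES M (\<Lambda> x) X"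
    by simp_all
  obtain Y where Y: "Y \<in> Linf M" "\<rho> Y \<le> \<rho> X" "\<And>y. y < s \<Longrightarrow> cdf_rv M Y y < \<Lambda> x"
    using exists_le_with_cdf_rv_less[OF qc li X _ _ sES] \<Lambda>(2)[of x] by blast
  have "ereal s \<le> VaR_Lambda M \<Lambda> Y"
  proof (rule le_VaR_Lambda)
    fix y assume y: "y < s"
    then have "\<Lambda> x \<le> \<Lambda> y"
      using \<Lambda>(1) sx by (simp add: antimono_def)
    then show "cdf_rv M Y y < \<Lambda> y"
      using Y(3)[OF y] by simp
  qed
  also have "\<dots> \<le> \<rho> Y"
    by (rule dom[OF Y(1)])
  finally show "ereal s \<le> \<rho> X"
    using Y(2) by simp
qed

lemma ES_Lambda_le_if_VaR_Lambda_plus_le: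
  assumes \<Lambda>: "antimono \<Lambda>" "\<And>x. 0 \<le> \<Lambda> x \<and> \<Lambda> x < 1"
    and qc: "quasi_convex M \<rho>" and li: "law_invariant M \<rho>"
    and dom: "\<And>X. X \<in> Linf M \<Longrightarrow> VaR_Lambda_plus M \<Lambda> X \<le> \<rho> X"
    and X: "X \<in> Linf M"
  shows "ES_Lambda M \<Lambda> X \<le> \<rho> X"
  unfolding ES_Lambda_def
proof (rule SUP_least, rule ereal_le_by_reals)
  fix x s assume "ereal s < min (ES M (\<Lambda> x) X) (ereal x)"
  then have sx: "s < x" and sES: "ereal s < ES M (\<Lambda> x) X"
    by simp_all
  have \<Lambda>x: "0 \<le> \<Lambda> x" "\<Lambda> x < 1"
    using \<Lambda>(2)[of x] by simp_all
  then have "s < integral {\<Lambda> x..1} (quantile X) / (1 - \<Lambda> x)"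
    using sES ES_eq_integral_quantile[OF X] by simp
  then obtain Y where Y: "Y \<in> Linf M" "\<rho> Y \<le> \<rho> X" "\<And>y. y < s \<Longrightarrow> cdf_rv M Y y \<le> \<Lambda> x"
    using exists_le_with_small_cdf_rv[OF qc li X \<Lambda>x] by blast
  have "ereal s \<le> VaR_Lambda_plus M \<Lambda> Y"
  proof (rule le_VaR_Lambda_plus)
    fix y assume y: "y < s"
    then have "\<Lambda> x \<le> \<Lambda> y"
      using \<Lambda>(1) sx by (simp add: antimono_def)
    then show "cdf_rv M Y y \<le> \<Lambda> y"
      using Y(3)[OF y] by simp
  qed
  also have "\<dots> \<le> \<rho> Y"
    by (rule dom[OF Y(1)])
  finally show "ereal s \<le> \<rho> X"
    using Y(2) by simp
qed

lemma ES_Lambda_least_above_VaR_Lambda: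
  assumes "antimono \<Lambda>" "\<forall>x. 0 < \<Lambda> x \<and> \<Lambda> x \<le> 1"
  shows "quasi_convex M (ES_Lambda M \<Lambda>) \<and> law_invariant M (ES_Lambda M \<Lambda>) \<and>
    (\<forall>X\<in>Linf M. ES_Lambda M \<Lambda> X \<ge> VaR_Lambda M \<Lambda> X) \<and>
    (\<forall>\<rho>. quasi_convex M \<rho> \<and> law_invariant M \<rho> \<and> (\<forall>X\<in>Linf M. \<rho> X \<ge> VaR_Lambda M \<Lambda> X)
      \<longrightarrow> (\<forall>X\<in>Linf M. \<rho> X \<ge> ES_Lambda M \<Lambda> X))"
proof (intro conjI allI impI ballI)
  show "quasi_convex M (ES_Lambda M \<Lambda>)"
    using assms(2) by (intro quasi_convex_ES_Lambda) (simp add: less_imp_le)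
  show "law_invariant M (ES_Lambda M \<Lambda>)"
    by (rule law_invariant_ES_Lambda)
  show "VaR_Lambda M \<Lambda> X \<le> ES_Lambda M \<Lambda> X" if "X \<in> Linf M" for X
    using that assms(2) by (intro VaR_Lambda_le_ES_Lambda) simp_all
  show "ES_Lambda M \<Lambda> X \<le> \<rho> X" if "X \<in> Linf M"
    and "quasi_convex M \<rho> \<and> law_invariant M \<rho> \<and> (\<forall>X\<in>Linf M. VaR_Lambda M \<Lambda> X \<le> \<rho> X)" for \<rho> X
    using that assms by (intro ES_Lambda_le_if_VaR_Lambda_le) simp_all
qed

lemma ES_Lambda_least_above_VaR_Lambda_plus:
  assumes "antimono \<Lambda>" "\<forall>x. 0 \<le> \<Lambda> x \<and> \<Lambda> x < 1"
  shows "quasi_convex M (ES_Lambda M \<Lambda>) \<and> law_invariant M (ES_Lambda M \<Lambda>) \<and>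
    (\<forall>X\<in>Linf M. ES_Lambda M \<Lambda> X \<ge> VaR_Lambda_plus M \<Lambda> X) \<and>
    (\<forall>\<rho>. quasi_convex M \<rho> \<and> law_invariant M \<rho> \<and> (\<forall>X\<in>Linf M. \<rho> X \<ge> VaR_Lambda_plus M \<Lambda> X)
      \<longrightarrow> (\<forall>X\<in>Linf M. \<rho> X \<ge> ES_Lambda M \<Lambda> X))"
proof (intro conjI allI impI ballI)
  show "quasi_convex M (ES_Lambda M \<Lambda>)"
    using assms(2) by (intro quasi_convex_ES_Lambda) (simp add: less_imp_le)
  show "law_invariant M (ES_Lambda M \<Lambda>)"
    by (rule law_invariant_ES_Lambda)
  show "VaR_Lambda_plus M \<Lambda> X \<le> ES_Lambda M \<Lambda> X" if "X \<in> Linf M" for X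
    using that assms(2) by (intro VaR_Lambda_plus_le_ES_Lambda) simp_all
  show "ES_Lambda M \<Lambda> X \<le> \<rho> X" if "X \<in> Linf M"
    and "quasi_convex M \<rho> \<and> law_invariant M \<rho> \<and> (\<forall>X\<in>Linf M. VaR_Lambda_plus M \<Lambda> X \<le> \<rho> X)" for \<rho> X
    using that assms by (intro ES_Lambda_le_if_VaR_Lambda_plus_le) simp_all
qed

end

theorem theorem2:
  fixes M :: "'a measure"
  assumes "prob_space M" and "atomless M"
  shows
   "(\<forall>\<Lambda>::real \<Rightarrow> real. antimono \<Lambda> \<and> (\<forall>x. 0 < \<Lambda> x \<and> \<Lambda> x \<le> 1) \<longrightarrow>
       quasi_convex M (ES_Lambda M \<Lambda>) \<and> law_invariant M (ES_Lambda M \<Lambda>) \<and>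
       (\<forall>X\<in>Linf M. ES_Lambda M \<Lambda> X \<ge> VaR_Lambda M \<Lambda> X) \<and>
       (\<forall>\<rho>. quasi_convex M \<rho> \<and> law_invariant M \<rho> \<and> (\<forall>X\<in>Linf M. \<rho> X \<ge> VaR_Lambda M \<Lambda> X)
            \<longrightarrow> (\<forall>X\<in>Linf M. \<rho> X \<ge> ES_Lambda M \<Lambda> X)))
  \<and> (\<forall>\<Lambda>::real \<Rightarrow> real. antimono \<Lambda> \<and> (\<forall>x. 0 \<le> \<Lambda> x \<and> \<Lambda> x < 1) \<longrightarrow>
       quasi_convex M (ES_Lambda M \<Lambda>) \<and> law_invariant M (ES_Lambda M \<Lambda>) \<and>
       (\<forall>X\<in>Linf M. ES_Lambda M \<Lambda> X \<ge> VaR_Lambda_plus M \<Lambda> X) \<and>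
       (\<forall>\<rho>. quasi_convex M \<rho> \<and> law_invariant M \<rho> \<and> (\<forall>X\<in>Linf M. \<rho> X \<ge> VaR_Lambda_plus M \<Lambda> X)
            \<longrightarrow> (\<forall>X\<in>Linf M. \<rho> X \<ge> ES_Lambda M \<Lambda> X)))
  \<and> (\<forall>\<Lambda>::real \<Rightarrow> real. antimono \<Lambda> \<and> (\<forall>x. 0 \<le> \<Lambda> x \<and> \<Lambda> x \<le> 1) \<longrightarrow>
       (\<forall>X\<in>Linf M. ES_Lambda M \<Lambda> X = (INF x. max (ES M (\<Lambda> x) X) (ereal x))))"
proof -
  interpret atomless_prob_space M
    using assms by (simp add: atomless_prob_space_def atomless_prob_space_axioms_def)
  show ?thesis
    using ES_Lambda_least_above_VaR_Lambda ES_Lambda_least_above_VaR_Lambda_plus ES_Lambda_eq_INF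
    by blast
qed

end
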